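(* Let $h\in\mathbb{R}[x_1,\ldots,x_n]$ be hyperbolic with respect to $\mathbf{e}$, and let $\mathbf{v}_1,\ldots,\mathbf{v}_m\in\Lambda_{++}(\mathbf{e})$. If $\mathbf{x}\in\Lambda_{++}(\mathbf{e})$, $1\leq i,j\leq m$, $\delta>1$ and $$\xi_j[h](\mathbf{x})\geq\frac{\delta}{\delta-1},$$ then $$\xi_i[h-\partial_jh](\mathbf{x}+\delta\mathbf{v}_j)\geq\xi_i[h](\mathbf{x}).$$
   Context: A homogeneous polynomial $h$ of degree $d$ is hyperbolic with respect to $\mathbf{e}\in\mathbb{R}^n$ if $h(\mathbf{e})\neq0$ and for every $\mathbf{x}\in\mathbb{R}^n$, $t\mapsto h(t\mathbf{e}-\mathbf{x})$ has only real zeros; writing $h(t\mathbf{e}-\mathbf{x})=h(\mathbf{e})\prod_{j=1}^d(t-\lambda_j(\mathbf{x}))$ defines the eigenvalues, and $\Lambda_{++}(\mathbf{e})=\{\mathbf{x}:\min_j\lambda_j(\mathbf{x})>0\}$. Notation: $\partial_j:=D_{\mathbf{v}_j}=\sum_k (\mathbf{v}_j)_k\,\partial/\partial x_k$ (directional derivative), and for a polynomial $g$, $\xi_j[g]:=g/\partial_jg$ (a rational function). *)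

theory Defs
  imports "HOL-Analysis.Analysis" "HOL-Computational_Algebra.Polynomial"
begin

definition poly_fun :: "(real^'n \<Rightarrow> real) \<Rightarrow> bool" where
  "poly_fun p \<longleftrightarrow> (\<exists>S c. finite (S :: ('n \<Rightarrow> nat) set) \<and>
      (\<forall>x. p x = (\<Sum>\<alpha>\<in>S. c \<alpha> * (\<Prod>i\<in>UNIV. (x $ i) ^ (\<alpha> i)))))"

definition homogeneous_poly :: "nat \<Rightarrow> (real^'n \<Rightarrow> real) \<Rightarrow> bool" where
  "homogeneous_poly d p \<longleftrightarrow> poly_fun p \<and> (\<forall>t x. p (t *\<^sub>R x) = t ^ d * p x)"

definition hyperbolic :: "(real^'n \<Rightarrow> real) \<Rightarrow> real^'n \<Rightarrow> bool" where
  "hyperbolic h e \<longleftrightarrow> (\<exists>d. homogeneous_poly d h) \<and> h e \<noteq> 0 \<and>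
     (\<forall>x. \<exists>q :: real poly. (\<forall>t. poly q t = h (t *\<^sub>R e - x)) \<and>
         (\<forall>z::complex. poly (map_poly of_real q) z = 0 \<longrightarrow> z \<in> \<real>))"

text \<open>Open hyperbolicity cone: all eigenvalues (the zeros of t \<mapsto> h(t e - x)) positive.\<close>
definition hcone :: "(real^'n \<Rightarrow> real) \<Rightarrow> real^'n \<Rightarrow> (real^'n) set" where
  "hcone h e = {x. \<forall>t. h (t *\<^sub>R e - x) = 0 \<longrightarrow> t > 0}"

definition dirderiv :: "real^'n \<Rightarrow> (real^'n \<Rightarrow> real) \<Rightarrow> real^'n \<Rightarrow> real" where
  "dirderiv v g x = deriv (\<lambda>s. g (x + s *\<^sub>R v)) 0"

definition xi :: "real^'n \<Rightarrow> (real^'n \<Rightarrow> real) \<Rightarrow> real^'n \<Rightarrow> real" where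
  "xi v g x = g x / dirderiv v g x"

end

theory Submission
  imports Defs "HOL-Complex_Analysis.Complex_Analysis"
    "HOL-Computational_Algebra.Fundamental_Theorem_Algebra"
    "HOL-Computational_Algebra.Polynomial_Factorial"
    "HOL-Computational_Algebra.Field_as_Ring"
begin

text \<open>Put \<open>a = v\<^sub>i\<close>, \<open>b = v\<^sub>j\<close> and expand \<open>h (x + s a + t b)\<close> in powers of \<open>s\<close>: the coefficients
  of \<open>s\<^sup>0\<close> and \<open>s\<^sup>1\<close> are \<open>B t = h (x + t b)\<close> and \<open>A t = D\<^sub>a h (x + t b)\<close>, and all three
  values of \<open>\<xi>\<close> in the statement are quotients of \<open>A\<close>, \<open>B\<close> and their derivatives.
  Garding's theorem, proved through Hurwitz's theorem on zeros of limits of holomorphic functions,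
  makes the cone convex and \<open>h\<close> hyperbolic along each of its points; hence
  \<open>h (x + s a + t b) \<noteq> 0\<close> whenever \<open>Im s > 0\<close> and \<open>Im t \<ge> 0\<close>. Consequently \<open>B\<close> has only
  negative roots, so \<open>B'/B = \<Sum> 1/(t - q)\<close>, and \<open>A/B\<close> maps the upper half-plane into the closed
  lower one, which forces \<open>A/B = \<Sum> r\<^sub>p/(t - p)\<close> with \<open>r\<^sub>p \<ge> 0\<close> and \<open>p < 0\<close>. Both sums are
  positive and decreasing on \<open>[0, \<infinity>)\<close>, and the inequality follows from comparing them at
  \<open>0\<close> and at \<open>\<delta>\<close>.\<close>

section \<open>Complex extension of a homogeneous polynomial\<close>

definition cvec :: "real^'n \<Rightarrow> complex^'n" where
  "cvec x = (\<chi> i. of_real (x$i))"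

lemma cvec_nth [simp]: "cvec x $ i = of_real (x $ i)"
  by (simp add: cvec_def)

lemma cvec_zero [simp]: "cvec 0 = 0"
  and cvec_add [simp]: "cvec (x + y) = cvec x + cvec y"
  and cvec_diff [simp]: "cvec (x - y) = cvec x - cvec y"
  and cvec_minus [simp]: "cvec (- x) = - cvec x"
  and cvec_scaleR [simp]: "cvec (r *\<^sub>R x) = of_real r *s cvec x"
  by (simp_all add: vec_eq_iff)

lemma continuous_on_cvec: "continuous_on A f \<Longrightarrow> continuous_on A (\<lambda>x. cvec (f x))"
  unfolding cvec_def by (intro continuous_on_vec_lambda continuous_intros)

lemma continuous_on_vector_scalar_mult [continuous_intros]:
  fixes f :: "'a::topological_space \<Rightarrow> complex" and g :: "'a \<Rightarrow> complex^'n"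
  shows "continuous_on A f \<Longrightarrow> continuous_on A g \<Longrightarrow> continuous_on A (\<lambda>x. f x *s g x)"
  unfolding vector_scalar_mult_def
  by (intro continuous_on_vec_lambda continuous_intros continuous_on_component)

definition homogeneous_expansion ::
    "nat \<Rightarrow> ('n \<Rightarrow> nat) set \<Rightarrow> (('n \<Rightarrow> nat) \<Rightarrow> real) \<Rightarrow> (real^'n \<Rightarrow> real) \<Rightarrow> bool" where
  "homogeneous_expansion d S c h \<longleftrightarrow> finite S \<and> (\<forall>\<alpha>\<in>S. sum \<alpha> UNIV = d) \<and>
     (\<forall>x. h x = (\<Sum>\<alpha>\<in>S. c \<alpha> * (\<Prod>i\<in>UNIV. (x$i) ^ (\<alpha> i))))"

lemma prod_power_scale:
  fixes t :: "'a::comm_semiring_1"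
  shows "(\<Prod>i\<in>UNIV. (t * x i) ^ (\<alpha> i)) = t ^ (sum \<alpha> UNIV) * (\<Prod>i\<in>UNIV. (x i) ^ (\<alpha> i))"
  by (simp add: power_mult_distrib prod.distrib power_sum)

text \<open>Only the monomials of total degree \<open>d\<close> survive: compare the coefficients of \<open>t\<^sup>d\<close>
  in the two polynomial expressions for \<open>h (t *\<^sub>R x)\<close>.\<close>

lemma homogeneous_poly_expansion:
  fixes h :: "real^'n \<Rightarrow> real"
  assumes "homogeneous_poly d h"
  shows "\<exists>S c. homogeneous_expansion d S c h"
proof -
  from assms obtain S c where fS: "finite (S :: ('n \<Rightarrow> nat) set)"
      and rep: "\<And>x. h x = (\<Sum>\<alpha>\<in>S. c \<alpha> * (\<Prod>i\<in>UNIV. (x $ i) ^ (\<alpha> i)))"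
      and hom: "\<And>t x. h (t *\<^sub>R x) = t ^ d * h x"
    unfolding homogeneous_poly_def poly_fun_def by blast
  define S' where "S' = {\<alpha>\<in>S. sum \<alpha> UNIV = d}"
  have "h x = (\<Sum>\<alpha>\<in>S'. c \<alpha> * (\<Prod>i\<in>UNIV. (x$i) ^ (\<alpha> i)))" for x
  proof -
    define q where "q = (\<Sum>\<alpha>\<in>S. monom (c \<alpha> * (\<Prod>i\<in>UNIV. (x$i) ^ (\<alpha> i))) (sum \<alpha> UNIV))"
    have "poly q t = poly (monom (h x) d) t" for t
    proof -
      have "poly q t = (\<Sum>\<alpha>\<in>S. c \<alpha> * (\<Prod>i\<in>UNIV. (x$i) ^ (\<alpha> i)) * t ^ sum \<alpha> UNIV)"
        by (simp add: q_def poly_sum poly_monom)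
      also have "\<dots> = h (t *\<^sub>R x)"
        by (simp add: rep prod_power_scale[of t "\<lambda>i. x$i"] mult_ac)
      also have "\<dots> = poly (monom (h x) d) t" by (simp add: hom poly_monom mult_ac)
      finally show ?thesis .
    qed
    hence "q = monom (h x) d" using poly_eq_poly_eq_iff by blast
    hence "coeff q d = h x" by simp
    moreover have "coeff q d = (\<Sum>\<alpha>\<in>S'. c \<alpha> * (\<Prod>i\<in>UNIV. (x$i) ^ (\<alpha> i)))"
      unfolding q_def coeff_sum coeff_monom S'_def using fS
      by (simp add: sum.inter_filter[symmetric] eq_commute)
    ultimately show ?thesis by simp
  qed
  moreover have "finite S'" using fS by (simp add: S'_def)
  ultimately show ?thesis unfolding homogeneous_expansion_def S'_def by blast
qed

locale homogeneous_form =
  fixes d :: nat and S :: "('n::finite \<Rightarrow> nat) set" and c :: "('n \<Rightarrow> nat) \<Rightarrow> real"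
    and h :: "real^'n \<Rightarrow> real"
  assumes expansion: "homogeneous_expansion d S c h"
begin

lemma finite_S: "finite S"
  and degree_S: "\<And>\<alpha>. \<alpha> \<in> S \<Longrightarrow> sum \<alpha> UNIV = d"
  and h_expansion: "h x = (\<Sum>\<alpha>\<in>S. c \<alpha> * (\<Prod>i\<in>UNIV. (x$i) ^ (\<alpha> i)))"
  using expansion unfolding homogeneous_expansion_def by auto

definition hC :: "complex^'n \<Rightarrow> complex" where
  "hC z = (\<Sum>\<alpha>\<in>S. of_real (c \<alpha>) * (\<Prod>i\<in>UNIV. (z$i) ^ (\<alpha> i)))"

lemma hC_cvec: "hC (cvec x) = of_real (h x)"
  by (simp add: hC_def h_expansion)

lemma hC_homogeneous: "hC (t *s z) = t ^ d * hC z"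
proof -
  have "hC (t *s z) = (\<Sum>\<alpha>\<in>S. t ^ d * (of_real (c \<alpha>) * (\<Prod>i\<in>UNIV. (z$i) ^ (\<alpha> i))))"
    unfolding hC_def by (intro sum.cong refl) (simp add: prod_power_scale[of t "\<lambda>i. z$i"] degree_S)
  thus ?thesis by (simp add: hC_def sum_distrib_left)
qed

lemma h_homogeneous: "h (t *\<^sub>R x) = t ^ d * h x"
  using hC_homogeneous[of "of_real t" "cvec x"] hC_cvec[of "t *\<^sub>R x"] hC_cvec[of x]
  by (metis cvec_scaleR of_real_eq_iff of_real_mult of_real_power)

lemma h_uminus: "h (- x) = (-1) ^ d * h x"
  using h_homogeneous[of "-1" x] by simp

lemma hC_cnj: "hC (\<chi> i. cnj (z$i)) = cnj (hC z)"
  by (simp add: hC_def)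

lemma hC_line: "hC (U + \<tau> *s V) = (\<Sum>\<alpha>\<in>S. of_real (c \<alpha>) * (\<Prod>i\<in>UNIV. (U$i + \<tau> * V$i) ^ (\<alpha> i)))"
  by (simp add: hC_def)

lemma holomorphic_hC_line: "(\<lambda>\<tau>. hC (U + \<tau> *s V)) holomorphic_on A"
  unfolding hC_line by (intro holomorphic_intros)

lemma continuous_on_hC_comp: "continuous_on A f \<Longrightarrow> continuous_on A (\<lambda>x. hC (f x))"
  unfolding hC_def by (intro continuous_intros continuous_on_component)

definition line_poly :: "complex^'n \<Rightarrow> complex^'n \<Rightarrow> complex poly" where
  "line_poly U V = (\<Sum>\<alpha>\<in>S. [:of_real (c \<alpha>):] * (\<Prod>i\<in>UNIV. [:U$i, V$i:] ^ (\<alpha> i)))"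

lemma poly_line_poly: "poly (line_poly U V) \<tau> = hC (U + \<tau> *s V)"
  by (simp add: line_poly_def hC_def poly_sum poly_prod mult_ac)

end

section \<open>Zero-free families on the upper half-plane\<close>

lemma uniform_limit_continuous_param:
  fixes g :: "real \<Rightarrow> complex \<Rightarrow> complex"
  assumes cont: "continuous_on UNIV (\<lambda>p. g (fst p) (snd p))"
    and lim: "\<sigma>s \<longlonglongrightarrow> \<sigma>0" and K: "compact K"
  shows "uniform_limit K (\<lambda>n. g (\<sigma>s n)) (g \<sigma>0) sequentially"
proof -
  define C where "C = insert \<sigma>0 (range \<sigma>s)"
  have "compact (C \<times> K)" unfolding C_def
    by (intro compact_Times compact_sequence_with_limit lim K)
  hence uc: "uniformly_continuous_on (C \<times> K) (\<lambda>p. g (fst p) (snd p))"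
    by (intro compact_uniformly_continuous continuous_on_subset[OF cont]) auto
  show ?thesis unfolding uniform_limit_iff
  proof (intro allI impI)
    fix e :: real assume "e > 0"
    with uc obtain r where "r > 0"
      and close: "\<And>p p'. p \<in> C \<times> K \<Longrightarrow> p' \<in> C \<times> K \<Longrightarrow> dist p' p < r \<Longrightarrow>
               dist (g (fst p') (snd p')) (g (fst p) (snd p)) < e"
      unfolding uniformly_continuous_on_def by metis
    have "\<forall>\<^sub>F n in sequentially. dist (\<sigma>s n) \<sigma>0 < r"
      using lim \<open>r > 0\<close> by (simp add: tendsto_iff)
    thus "\<forall>\<^sub>F n in sequentially. \<forall>x\<in>K. dist (g (\<sigma>s n) x) (g \<sigma>0 x) < e"
    proof eventually_elim
      case (elim n)
      show ?case
      proof
        fix x assume "x \<in> K"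
        have "dist (\<sigma>s n, x) (\<sigma>0, x) < r"
          using elim by (simp add: dist_Pair_Pair)
        thus "dist (g (\<sigma>s n) x) (g \<sigma>0 x) < e"
          using close[of "(\<sigma>0, x)" "(\<sigma>s n, x)"] \<open>x \<in> K\<close> by (auto simp: C_def)
      qed
    qed
  qed
qed

lemma Hurwitz_upper_half_plane:
  fixes g :: "real \<Rightarrow> complex \<Rightarrow> complex"
  assumes cont: "continuous_on UNIV (\<lambda>p. g (fst p) (snd p))"
    and holo: "\<And>\<sigma>. g \<sigma> holomorphic_on {z. Im z > 0}"
    and lim: "\<sigma>s \<longlonglongrightarrow> \<sigma>0"
    and nz: "\<And>n z. Im z > 0 \<Longrightarrow> g (\<sigma>s n) z \<noteq> 0"
    and z1: "Im z1 > 0" "g \<sigma>0 z1 \<noteq> 0"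
    and z: "Im z > 0"
  shows "g \<sigma>0 z \<noteq> 0"
proof
  assume g0: "g \<sigma>0 z = 0"
  have "g \<sigma>0 z \<noteq> 0"
  proof (rule Hurwitz_no_zeros[of "{z. Im z > 0}" "\<lambda>n. g (\<sigma>s n)" "g \<sigma>0"])
    show "open {z. 0 < Im z}" by (rule open_halfspace_Im_gt)
    show "connected {z. 0 < Im z}" by (intro convex_connected convex_halfspace_Im_gt)
    show "\<And>n. g (\<sigma>s n) holomorphic_on {z. 0 < Im z}" "g \<sigma>0 holomorphic_on {z. 0 < Im z}"
      by (rule holo)+
    show "\<And>K. compact K \<Longrightarrow> K \<subseteq> {z. 0 < Im z} \<Longrightarrow>
        uniform_limit K (\<lambda>n. g (\<sigma>s n)) (g \<sigma>0) sequentially"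
      by (rule uniform_limit_continuous_param[OF cont lim])
    show "\<not> g \<sigma>0 constant_on {z. 0 < Im z}"
      using g0 z z1 unfolding constant_on_def by force
    show "\<And>n z. z \<in> {z. 0 < Im z} \<Longrightarrow> g (\<sigma>s n) z \<noteq> 0" using nz by auto
    show "z \<in> {z. 0 < Im z}" using z by auto
  qed
  with g0 show False by simp
qed

text \<open>Zeros in the closed upper half-plane stay in a compact set and never touch the real
  axis, so the parameters with a zero in the open upper half-plane form a compact set.\<close>

lemma compact_upper_zero_params:
  fixes g :: "real \<Rightarrow> complex \<Rightarrow> complex"
  assumes cont: "continuous_on UNIV (\<lambda>p. g (fst p) (snd p))"
    and bound: "\<And>\<sigma> z. \<sigma> \<in> {0..1} \<Longrightarrow> R \<le> norm z \<Longrightarrow> g \<sigma> z \<noteq> 0"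
    and real: "\<And>\<sigma> z. \<sigma> \<in> {0..1} \<Longrightarrow> Im z = 0 \<Longrightarrow> g \<sigma> z \<noteq> 0"
  shows "compact {\<sigma>\<in>{0..1}. \<exists>w. Im w > 0 \<and> g \<sigma> w = 0}"
proof -
  define K where "K = cball 0 R \<inter> {z. 0 \<le> Im z}"
  have "closed {p. g (fst p) (snd p) = 0}"
    using continuous_closed_preimage_constant[OF cont closed_UNIV, of 0] by simp
  hence "compact (fst ` (({0..1} \<times> K) \<inter> {p. g (fst p) (snd p) = 0}))" unfolding K_def
    by (intro compact_continuous_image continuous_intros compact_Int_closed compact_Times
        compact_Icc compact_cball closed_halfspace_Im_ge)
  also have "fst ` (({0..1} \<times> K) \<inter> {p. g (fst p) (snd p) = 0}) =
      {\<sigma>\<in>{0..1}. \<exists>w. Im w > 0 \<and> g \<sigma> w = 0}"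
  proof (intro equalityI subsetI)
    fix \<sigma> assume "\<sigma> \<in> fst ` (({0..1} \<times> K) \<inter> {p. g (fst p) (snd p) = 0})"
    then obtain w where w: "\<sigma> \<in> {0..1}" "w \<in> K" "g \<sigma> w = 0" by force
    hence "Im w \<noteq> 0" using real by blast
    with w show "\<sigma> \<in> {\<sigma>\<in>{0..1}. \<exists>w. Im w > 0 \<and> g \<sigma> w = 0}" by (force simp: K_def)
  next
    fix \<sigma> assume "\<sigma> \<in> {\<sigma>\<in>{0..1}. \<exists>w. Im w > 0 \<and> g \<sigma> w = 0}"
    then obtain w where w: "\<sigma> \<in> {0..1}" "Im w > 0" "g \<sigma> w = 0" by blast
    hence "w \<in> K" using bound[of \<sigma> w] by (force simp: K_def)
    with w show "\<sigma> \<in> fst ` (({0..1} \<times> K) \<inter> {p. g (fst p) (snd p) = 0})"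
      by (auto intro!: image_eqI[of _ fst "(\<sigma>, w)"])
  qed
  finally show ?thesis .
qed

text \<open>A continuous family of holomorphic functions, zero-free near infinity and on the real
  axis, cannot acquire a zero in the upper half-plane: at the first parameter \<open>m\<close> with
  such a zero, Hurwitz's theorem applied to parameters approaching \<open>m\<close> from below forbids it.\<close>

lemma zero_free_upper_half_plane_homotopy:
  fixes g :: "real \<Rightarrow> complex \<Rightarrow> complex"
  assumes cont: "continuous_on UNIV (\<lambda>p. g (fst p) (snd p))"
    and holo: "\<And>\<sigma>. g \<sigma> holomorphic_on {z. Im z > 0}"
    and bound: "\<And>\<sigma> z. \<sigma> \<in> {0..1} \<Longrightarrow> R \<le> norm z \<Longrightarrow> g \<sigma> z \<noteq> 0"
    and real: "\<And>\<sigma> z. \<sigma> \<in> {0..1} \<Longrightarrow> Im z = 0 \<Longrightarrow> g \<sigma> z \<noteq> 0"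
    and start: "\<And>z. Im z > 0 \<Longrightarrow> g 0 z \<noteq> 0"
    and \<sigma>: "\<sigma> \<in> {0..1}" and z: "Im z > 0"
  shows "g \<sigma> z \<noteq> 0"
proof
  assume "g \<sigma> z = 0"
  define Z where "Z = {\<sigma>\<in>{0..1}. \<exists>w. Im w > 0 \<and> g \<sigma> w = 0}"
  have cZ: "compact Z" unfolding Z_def by (rule compact_upper_zero_params[OF cont bound real])
  have "\<sigma> \<in> Z" using \<open>g \<sigma> z = 0\<close> \<sigma> z by (auto simp: Z_def)
  define m where "m = Inf Z"
  have mZ: "m \<in> Z" unfolding m_def using cZ \<open>\<sigma> \<in> Z\<close>
    by (intro closed_contains_Inf compact_imp_closed bounded_imp_bdd_below compact_imp_bounded) auto
  have "m \<in> {0..1}" "m \<noteq> 0" using mZ start by (auto simp: Z_def)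
  hence m01: "0 < m" "m \<le> 1" by auto
  define \<sigma>s where "\<sigma>s = (\<lambda>n::nat. m - m / real (n + 2))"
  have lim: "\<sigma>s \<longlonglongrightarrow> m"
  proof -
    have "(\<lambda>n::nat. m / real (n + 2)) \<longlonglongrightarrow> 0"
      using LIMSEQ_ignore_initial_segment[OF lim_const_over_n[of m], of 2] by simp
    thus ?thesis unfolding \<sigma>s_def using tendsto_diff[OF tendsto_const[of m]] by fastforce
  qed
  have nz: "g (\<sigma>s n) w \<noteq> 0" if "Im w > 0" for n w
  proof
    assume g0: "g (\<sigma>s n) w = 0"
    have pos: "m / real (n + 2) > 0" using m01 by simp
    have "m / real (n + 2) \<le> m" using m01 by (simp add: divide_le_eq)
    hence "\<sigma>s n \<in> {0..1}" using pos m01 unfolding \<sigma>s_def atLeastAtMost_iff by linarith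
    hence "\<sigma>s n \<in> Z" using that g0 unfolding Z_def by auto
    hence "m \<le> \<sigma>s n" unfolding m_def
      by (intro cInf_lower bounded_imp_bdd_below compact_imp_bounded cZ)
    thus False using pos unfolding \<sigma>s_def by simp
  qed
  obtain w where w: "Im w > 0" "g m w = 0" using mZ by (auto simp: Z_def)
  define z1 where "z1 = \<i> * of_real (max R 1)"
  have "norm z1 = max R 1" by (simp add: z1_def norm_mult)
  hence z1: "Im z1 > 0" "g m z1 \<noteq> 0" using bound[of m z1] m01 by (auto simp: z1_def)
  have "g m w \<noteq> 0" by (rule Hurwitz_upper_half_plane[OF cont holo lim nz z1 w(1)])
  with w show False by simp
qed

abbreviation cpoly :: "real poly \<Rightarrow> complex poly" where
  "cpoly \<equiv> map_poly of_real"

lemma poly_cpoly_of_real [simp]: "poly (cpoly p) (of_real x) = of_real (poly p x)"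
  by (induction p) (simp_all add: map_poly_pCons)

lemma cpoly_mult: "cpoly (p * q) = cpoly p * cpoly q"
  by (rule poly_eqI) (simp add: coeff_map_poly coeff_mult)

lemma cpoly_power: "cpoly (p ^ n) = cpoly p ^ n"
  by (induction n) (simp_all add: cpoly_mult)

lemma cpoly_linear [simp]: "cpoly [:a, b:] = [:of_real a, of_real b:]"
  by (simp add: map_poly_pCons)

lemma degree_cpoly [simp]: "degree (cpoly p) = degree p"
  by (simp add: degree_map_poly)

lemma cpoly_eq_0_iff [simp]: "cpoly p = 0 \<longleftrightarrow> p = 0"
  by (simp add: map_poly_eq_0_iff)

lemma Re_poly_of_real: "Re (poly q (of_real t)) = poly (map_poly Re q) t"
  by (induction q) (simp_all add: map_poly_pCons)

lemma poly_eqI_on_reals: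
  fixes p q :: "complex poly"
  assumes "\<And>t::real. poly p (of_real t) = poly q (of_real t)"
  shows "p = q"
proof (rule ccontr)
  assume "p \<noteq> q"
  hence "finite {x. poly (p - q) x = 0}" by (intro poly_roots_finite) simp
  moreover have "range (of_real :: real \<Rightarrow> complex) \<subseteq> {x. poly (p - q) x = 0}"
    using assms by auto
  moreover have "infinite (range (of_real :: real \<Rightarrow> complex))"
    by (metis finite_imageD inj_of_real infinite_UNIV_char_0)
  ultimately show False using finite_subset by blast
qed

lemma cpoly_Re_if_real_values:
  fixes q :: "complex poly"
  assumes "\<And>t::real. poly q (of_real t) \<in> \<real>"
  shows "q = cpoly (map_poly Re q)"
proof (rule poly_eqI_on_reals)
  fix t :: real
  have "poly q (of_real t) = of_real (Re (poly q (of_real t)))"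
    using assms[of t] by (simp add: complex_is_Real_iff complex_eq_iff)
  thus "poly q (of_real t) = poly (cpoly (map_poly Re q)) (of_real t)"
    by (simp add: Re_poly_of_real)
qed

section \<open>Garding's theorem\<close>

lemma nonzero_near_axis_uniform:
  fixes \<phi> :: "real \<times> complex \<Rightarrow> complex"
  assumes cont: "continuous_on UNIV \<phi>" and nz: "\<And>\<sigma>. \<sigma> \<in> {0..1} \<Longrightarrow> \<phi> (\<sigma>, 0) \<noteq> 0"
  shows "\<exists>r>0. \<forall>\<sigma>\<in>{0..1}. \<forall>w. norm w < r \<longrightarrow> \<phi> (\<sigma>, w) \<noteq> 0"
proof -
  have "closed {p. \<phi> p = 0}"
    using continuous_closed_preimage_constant[OF cont closed_UNIV, of 0] by simp
  moreover have "({0..1} \<times> {0}) \<inter> {p. \<phi> p = 0} = {}" using nz by auto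
  ultimately obtain r where "r > 0" and r: "\<And>p q. p \<in> {0..1} \<times> {0} \<Longrightarrow> \<phi> q = 0 \<Longrightarrow> r \<le> dist p q"
    using separate_compact_closed[of "{0..1::real} \<times> {0::complex}" "{p. \<phi> p = 0}"]
    by (auto simp: compact_Times)
  have "\<phi> (\<sigma>, w) \<noteq> 0" if "\<sigma> \<in> {0..1}" "norm w < r" for \<sigma> w
    using r[of "(\<sigma>, 0)" "(\<sigma>, w)"] that by (auto simp: dist_Pair_Pair dist_norm)
  with \<open>r > 0\<close> show ?thesis by blast
qed

context homogeneous_form
begin

text \<open>\<open>hyperbolic_along u\<close> is hyperbolicity of \<open>h\<close> in direction \<open>u\<close>, phrased through the
  complex extension; \<open>h u \<noteq> 0\<close> follows from it.\<close>

definition hyperbolic_along :: "real^'n \<Rightarrow> bool" where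
  "hyperbolic_along u \<longleftrightarrow> (\<forall>y \<tau>. hC (cvec y + \<tau> *s cvec u) = 0 \<longrightarrow> Im \<tau> = 0)"

lemma hyperbolic_along_nonzero: "hyperbolic_along u \<Longrightarrow> h u \<noteq> 0"
proof
  assume hy: "hyperbolic_along u" and h0: "h u = 0"
  have "hC (cvec 0 + \<i> *s cvec u) = \<i> ^ d * hC (cvec u)" by (simp add: hC_homogeneous[symmetric])
  also have "\<dots> = 0" by (simp add: hC_cvec h0)
  finally have "Im \<i> = 0" using hy unfolding hyperbolic_along_def by blast
  thus False by simp
qed

lemma hyperbolic_imp_hyperbolic_along:
  assumes "hyperbolic h e" shows "hyperbolic_along e"
  unfolding hyperbolic_along_def
proof (intro allI impI)
  fix y \<tau> assume zero: "hC (cvec y + \<tau> *s cvec e) = 0"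
  obtain q :: "real poly" where q: "\<And>t. poly q t = h (t *\<^sub>R e - (- y))"
    and real_roots: "\<And>z::complex. poly (cpoly q) z = 0 \<Longrightarrow> z \<in> \<real>"
    using assms unfolding hyperbolic_def by blast
  have "line_poly (cvec y) (cvec e) = cpoly q"
  proof (rule poly_eqI_on_reals)
    fix t :: real
    have "poly (line_poly (cvec y) (cvec e)) (of_real t) = hC (cvec (y + t *\<^sub>R e))"
      by (simp add: poly_line_poly)
    also have "\<dots> = of_real (poly q t)" by (simp only: hC_cvec q) (simp add: add.commute)
    finally show "poly (line_poly (cvec y) (cvec e)) (of_real t) = poly (cpoly q) (of_real t)"
      by simp
  qed
  hence "poly (cpoly q) \<tau> = 0" using zero by (simp flip: poly_line_poly)
  thus "Im \<tau> = 0" using real_roots complex_is_Real_iff by blast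
qed

lemma hcone_nonzero: "y \<in> hcone h u \<Longrightarrow> h y \<noteq> 0"
  unfolding hcone_def using h_uminus[of y] by force

lemma hcone_root_swap:
  assumes "h u \<noteq> 0" "v \<in> hcone h u" "h (t *\<^sub>R v - u) = 0"
  shows "t > 0"
proof (cases "t = 0")
  case True
  thus ?thesis using assms(1,3) h_uminus[of u] by simp
next
  case False
  have "t *\<^sub>R v - u = (- t) *\<^sub>R ((1 / t) *\<^sub>R u - v)" using False by (simp add: algebra_simps)
  hence "h (t *\<^sub>R v - u) = (- t) ^ d * h ((1 / t) *\<^sub>R u - v)" by (simp only: h_homogeneous)
  hence "h ((1 / t) *\<^sub>R u - v) = 0" using assms(3) False by simp
  hence "1 / t > 0" using assms(2) unfolding hcone_def by blast
  thus ?thesis by simp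
qed

lemma hcone_scaleR:
  assumes "y \<in> hcone h u" "r > 0"
  shows "r *\<^sub>R y \<in> hcone h u"
  unfolding hcone_def
proof (intro CollectI allI impI)
  fix t assume ht: "h (t *\<^sub>R u - r *\<^sub>R y) = 0"
  have "t *\<^sub>R u - r *\<^sub>R y = r *\<^sub>R ((t / r) *\<^sub>R u - y)" using assms(2) by (simp add: algebra_simps)
  hence "h (t *\<^sub>R u - r *\<^sub>R y) = r ^ d * h ((t / r) *\<^sub>R u - y)" by (simp only: h_homogeneous)
  hence "h ((t / r) *\<^sub>R u - y) = 0" using ht assms(2) by simp
  hence "t / r > 0" using assms(1) unfolding hcone_def by blast
  thus "t > 0" using assms(2) by (simp add: zero_less_divide_iff)
qed

lemma hcone_segment:
  assumes "h u \<noteq> 0" "y \<in> hcone h u" "\<sigma> \<in> {0..1}"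
  shows "(1 - \<sigma>) *\<^sub>R u + \<sigma> *\<^sub>R y \<in> hcone h u"
  unfolding hcone_def
proof (intro CollectI allI impI)
  fix t assume h0: "h (t *\<^sub>R u - ((1 - \<sigma>) *\<^sub>R u + \<sigma> *\<^sub>R y)) = 0"
  show "t > 0"
  proof (cases "\<sigma> = 0")
    case True
    with h0 have "h ((t - 1) *\<^sub>R u) = 0" by (simp add: algebra_simps)
    hence "t - 1 = 0" using assms(1) by (simp add: h_homogeneous)
    thus ?thesis by simp
  next
    case False
    hence s0: "\<sigma> > 0" using assms(3) by auto
    have "t *\<^sub>R u - ((1 - \<sigma>) *\<^sub>R u + \<sigma> *\<^sub>R y) = \<sigma> *\<^sub>R (((t - 1 + \<sigma>) / \<sigma>) *\<^sub>R u - y)"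
      using s0 by (simp add: algebra_simps)
    hence "h (((t - 1 + \<sigma>) / \<sigma>) *\<^sub>R u - y) = 0" using h0 s0 by (simp add: h_homogeneous)
    hence "(t - 1 + \<sigma>) / \<sigma> > 0" using assms(2) unfolding hcone_def by blast
    hence "t - 1 + \<sigma> > 0" using s0 by (simp add: zero_less_divide_iff)
    thus ?thesis using assms(3) by auto
  qed
qed

text \<open>By homogeneity \<open>hC (W + \<tau> C) = \<tau>\<^sup>d hC (W / \<tau> + C)\<close>, which is nonzero for large \<open>\<tau>\<close>
  because \<open>hC (cvec C) = h C \<noteq> 0\<close>.\<close>

lemma hC_zeros_bounded:
  fixes W :: "real \<Rightarrow> complex^'n" and C :: "real \<Rightarrow> real^'n"
  assumes cW: "continuous_on UNIV W" and cC: "continuous_on UNIV C"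
    and nz: "\<And>\<sigma>. \<sigma> \<in> {0..1} \<Longrightarrow> h (C \<sigma>) \<noteq> 0"
  shows "\<exists>R. \<forall>\<sigma>\<in>{0..1}. \<forall>\<tau>. R \<le> norm \<tau> \<longrightarrow> hC (W \<sigma> + \<tau> *s cvec (C \<sigma>)) \<noteq> 0"
proof -
  define \<phi> where "\<phi> = (\<lambda>p::real \<times> complex. hC (snd p *s W (fst p) + cvec (C (fst p))))"
  have "continuous_on UNIV \<phi>" unfolding \<phi>_def
    by (intro continuous_on_hC_comp continuous_intros continuous_on_cvec
        continuous_on_compose2[OF cW] continuous_on_compose2[OF cC]) auto
  moreover have "\<phi> (\<sigma>, 0) \<noteq> 0" if "\<sigma> \<in> {0..1}" for \<sigma>
    using nz[OF that] by (simp add: \<phi>_def hC_cvec)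
  ultimately obtain r where "r > 0" and r: "\<And>\<sigma> w. \<sigma> \<in> {0..1} \<Longrightarrow> norm w < r \<Longrightarrow> \<phi> (\<sigma>, w) \<noteq> 0"
    using nonzero_near_axis_uniform by blast
  have "hC (W \<sigma> + \<tau> *s cvec (C \<sigma>)) \<noteq> 0" if "\<sigma> \<in> {0..1}" "2 / r \<le> norm \<tau>" for \<sigma> \<tau>
  proof -
    have "\<tau> \<noteq> 0" using that(2) \<open>r > 0\<close> by auto
    have "norm (inverse \<tau>) = 1 / norm \<tau>" by (simp add: norm_inverse divide_inverse)
    also have "\<dots> \<le> r / 2" using that(2) \<open>r > 0\<close> \<open>\<tau> \<noteq> 0\<close> by (simp add: divide_le_eq field_simps)
    finally have "norm (inverse \<tau>) \<le> r / 2" .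
    hence "\<phi> (\<sigma>, inverse \<tau>) \<noteq> 0" using r[OF that(1)] \<open>r > 0\<close> by simp
    moreover have "W \<sigma> + \<tau> *s cvec (C \<sigma>) = \<tau> *s (inverse \<tau> *s W \<sigma> + cvec (C \<sigma>))"
      using \<open>\<tau> \<noteq> 0\<close> by (simp add: vec_eq_iff field_simps)
    hence "hC (W \<sigma> + \<tau> *s cvec (C \<sigma>)) = \<tau> ^ d * \<phi> (\<sigma>, inverse \<tau>)"
      by (simp only: hC_homogeneous \<phi>_def fst_conv snd_conv)
    ultimately show ?thesis using \<open>\<tau> \<noteq> 0\<close> by simp
  qed
  thus ?thesis by blast
qed

text \<open>Deform \<open>e\<close> into \<open>a\<close> along the segment, which stays in the cone; the imaginary shift
  \<open>\<i> \<alpha> e\<close> keeps the real axis zero-free, and at \<open>\<sigma> = 0\<close> hyperbolicity along \<open>e\<close> applies.\<close>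

lemma garding_shifted:
  assumes hy: "hyperbolic_along e" and a: "a \<in> hcone h e"
    and "\<alpha> > 0" and "Im z > 0"
  shows "hC (cvec y + (\<i> * of_real \<alpha>) *s cvec e + z *s cvec a) \<noteq> 0"
proof -
  define as where "as = (\<lambda>\<sigma>::real. (1 - \<sigma>) *\<^sub>R e + \<sigma> *\<^sub>R a)"
  have cas: "continuous_on UNIV as" unfolding as_def by (intro continuous_intros)
  have as_nz: "h (as \<sigma>) \<noteq> 0" if "\<sigma> \<in> {0..1}" for \<sigma>
    using hcone_nonzero[OF hcone_segment[OF hyperbolic_along_nonzero[OF hy] a that]]
    by (simp add: as_def)
  define g where "g = (\<lambda>\<sigma> z. hC ((cvec y + (\<i> * of_real \<alpha>) *s cvec e) + z *s cvec (as \<sigma>)))"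
  have "\<exists>R. \<forall>\<sigma>\<in>{0..1}. \<forall>\<tau>. R \<le> norm \<tau> \<longrightarrow>
      hC ((cvec y + (\<i> * of_real \<alpha>) *s cvec e) + \<tau> *s cvec (as \<sigma>)) \<noteq> 0"
    by (rule hC_zeros_bounded[OF _ cas as_nz]) (intro continuous_intros)
  then obtain R where R: "\<And>\<sigma> z. \<sigma> \<in> {0..1} \<Longrightarrow> R \<le> norm z \<Longrightarrow> g \<sigma> z \<noteq> 0"
    unfolding g_def by blast
  have "g 1 z \<noteq> 0"
  proof (rule zero_free_upper_half_plane_homotopy[where R = R and g = g])
    show "continuous_on UNIV (\<lambda>p. g (fst p) (snd p))" unfolding g_def
      by (auto intro!: continuous_on_hC_comp continuous_intros continuous_on_cvec
          continuous_on_compose2[OF cas])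
    show "g \<sigma> holomorphic_on {z. 0 < Im z}" for \<sigma> unfolding g_def by (rule holomorphic_hC_line)
    show "g \<sigma> z \<noteq> 0" if "\<sigma> \<in> {0..1}" "Im z = 0" for \<sigma> z
    proof
      assume g0: "g \<sigma> z = 0"
      have "z = of_real (Re z)" using that(2) by (simp add: complex_eq_iff)
      hence "cvec y + (\<i> * of_real \<alpha>) *s cvec e + z *s cvec (as \<sigma>)
          = cvec (y + Re z *\<^sub>R as \<sigma>) + (\<i> * of_real \<alpha>) *s cvec e"
        by (simp add: vec_eq_iff algebra_simps)
      with g0 have "Im (\<i> * of_real \<alpha>) = 0" using hy unfolding hyperbolic_along_def g_def by metis
      thus False using \<open>\<alpha> > 0\<close> by simp
    qed
    show "g 0 z \<noteq> 0" if "Im z > 0" for z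
    proof
      assume g0: "g 0 z = 0"
      have "cvec y + (\<i> * of_real \<alpha>) *s cvec e + z *s cvec (as 0) = cvec y + (\<i> * of_real \<alpha> + z) *s cvec e"
        by (simp add: as_def vec_eq_iff algebra_simps)
      with g0 have "Im (\<i> * of_real \<alpha> + z) = 0" using hy unfolding hyperbolic_along_def g_def by metis
      thus False using \<open>\<alpha> > 0\<close> that by simp
    qed
  qed (use R \<open>Im z > 0\<close> in auto)
  thus ?thesis by (simp add: g_def as_def)
qed

lemma garding_upper_half_plane:
  assumes hy: "hyperbolic_along e" and a: "a \<in> hcone h e" and \<tau>: "Im \<tau> > 0"
  shows "hC (cvec y + \<tau> *s cvec a) \<noteq> 0"
proof -
  define g where "g = (\<lambda>\<alpha>::real. \<lambda>z. hC ((cvec y + (\<i> * of_real \<alpha>) *s cvec e) + z *s cvec a))"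
  obtain R where R: "\<And>z. R \<le> norm z \<Longrightarrow> hC (cvec y + z *s cvec a) \<noteq> 0"
    using hC_zeros_bounded[of "\<lambda>_. cvec y" "\<lambda>_. a"] hcone_nonzero[OF a]
    by (fastforce intro: continuous_intros)
  define z1 where "z1 = \<i> * of_real (max R 1)"
  have "norm z1 = max R 1" by (simp add: z1_def norm_mult)
  have "g 0 \<tau> \<noteq> 0"
  proof (rule Hurwitz_upper_half_plane[where g = g and \<sigma>s = "\<lambda>n. 1 / real (Suc n)"])
    show "continuous_on UNIV (\<lambda>p. g (fst p) (snd p))" unfolding g_def
      by (intro continuous_on_hC_comp continuous_intros continuous_on_cvec)
    show "g \<alpha> holomorphic_on {z. 0 < Im z}" for \<alpha>
      unfolding g_def by (rule holomorphic_hC_line)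
    show "(\<lambda>n. 1 / real (Suc n)) \<longlonglongrightarrow> 0"
      using LIMSEQ_ignore_initial_segment[OF lim_const_over_n[of 1], of 1] by simp
    show "g (1 / real (Suc n)) z \<noteq> 0" if "Im z > 0" for n z
      using garding_shifted[OF hy a _ that, of "1 / real (Suc n)" y] unfolding g_def by simp
    show "g 0 z1 \<noteq> 0" unfolding g_def using R[of z1] \<open>norm z1 = max R 1\<close> by auto
  qed (simp_all add: z1_def \<tau>)
  thus ?thesis by (simp add: g_def)
qed

theorem garding_hyperbolic_along:
  assumes hy: "hyperbolic_along e" and a: "a \<in> hcone h e"
  shows "hyperbolic_along a"
  unfolding hyperbolic_along_def
proof (intro allI impI)
  fix y \<tau> assume zero: "hC (cvec y + \<tau> *s cvec a) = 0"
  show "Im \<tau> = 0"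
  proof (rule ccontr)
    assume "Im \<tau> \<noteq> 0"
    then consider "Im \<tau> > 0" | "Im (cnj \<tau>) > 0" by (cases "Im \<tau> > 0") auto
    thus False
    proof cases
      case 1 thus False using garding_upper_half_plane[OF hy a 1, of y] zero by simp
    next
      case 2
      have "(\<chi> i. cnj ((cvec y + \<tau> *s cvec a) $ i)) = cvec y + cnj \<tau> *s cvec a"
        by (simp add: vec_eq_iff)
      hence "hC (cvec y + cnj \<tau> *s cvec a) = cnj (hC (cvec y + \<tau> *s cvec a))"
        by (metis hC_cnj)
      thus False using garding_upper_half_plane[OF hy a 2, of y] zero by simp
    qed
  qed
qed

text \<open>Deform \<open>u\<close> into \<open>y\<close> inside the cone: the line through \<open>-y\<close> in direction \<open>v\<close> has no
  zero \<open>\<tau> = \<i> z\<close> with \<open>Im z > 0\<close> (real \<open>\<tau>\<close> would be a real root, and at \<open>\<sigma> = 0\<close> the roots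
  of \<open>h (\<tau> v - u)\<close> are positive).\<close>

lemma hcone_upper_zero_free:
  assumes hu: "hyperbolic_along u" and hv: "hyperbolic_along v"
    and v: "v \<in> hcone h u" and y: "y \<in> hcone h u" and z: "Im z > 0"
  shows "hC (cvec (- y) + (\<i> * z) *s cvec v) \<noteq> 0"
proof -
  have hu0: "h u \<noteq> 0" by (rule hyperbolic_along_nonzero[OF hu])
  define ys where "ys = (\<lambda>\<sigma>::real. (1 - \<sigma>) *\<^sub>R u + \<sigma> *\<^sub>R y)"
  have cys: "continuous_on UNIV ys" unfolding ys_def by (intro continuous_intros)
  define g where "g = (\<lambda>\<sigma> z. hC (cvec (- ys \<sigma>) + (\<i> * z) *s cvec v))"
  have "\<exists>R. \<forall>\<sigma>\<in>{0..1}. \<forall>\<tau>. R \<le> norm \<tau> \<longrightarrow> hC (cvec (- ys \<sigma>) + \<tau> *s cvec ((\<lambda>_. v) \<sigma>)) \<noteq> 0"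
    by (rule hC_zeros_bounded)
      (auto intro!: continuous_intros continuous_on_cvec cys hyperbolic_along_nonzero[OF hv])
  then obtain R where
    R: "\<And>\<sigma> z. \<sigma> \<in> {0..(1::real)} \<Longrightarrow> R \<le> norm z \<Longrightarrow> hC (cvec (- ys \<sigma>) + z *s cvec v) \<noteq> 0"
    by blast
  have "g 1 z \<noteq> 0"
  proof (rule zero_free_upper_half_plane_homotopy[where R = R and g = g])
    show "continuous_on UNIV (\<lambda>p. g (fst p) (snd p))" unfolding g_def
      by (auto intro!: continuous_on_hC_comp continuous_intros continuous_on_cvec
          continuous_on_compose2[OF cys])
    show "g \<sigma> holomorphic_on {z. 0 < Im z}" for \<sigma>
    proof -
      have "(\<lambda>z. hC (cvec (- ys \<sigma>) + z *s cvec v)) \<circ> (\<lambda>z. \<i> * z) holomorphic_on {z. 0 < Im z}"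
        by (intro holomorphic_on_compose holomorphic_intros holomorphic_hC_line)
      thus ?thesis by (simp add: g_def o_def)
    qed
    show "g \<sigma> z \<noteq> 0" if "\<sigma> \<in> {0..1}" "R \<le> norm z" for \<sigma> z
      using R[of \<sigma> "\<i> * z"] that by (simp add: g_def norm_mult)
    show "g \<sigma> z \<noteq> 0" if s: "\<sigma> \<in> {0..1}" and iz: "Im z = 0" for \<sigma> z
    proof
      assume g0: "g \<sigma> z = 0"
      hence "Im (\<i> * z) = 0" using hv unfolding hyperbolic_along_def g_def by blast
      hence "z = 0" using iz by (simp add: complex_eq_iff)
      with g0 have "h (- ys \<sigma>) = 0" by (simp add: g_def hC_cvec del: cvec_minus)
      moreover have "h (0 *\<^sub>R u - ys \<sigma>) \<noteq> 0"
        using hcone_segment[OF hu0 y s] unfolding hcone_def ys_def by force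
      ultimately show False by simp
    qed
    show "g 0 z \<noteq> 0" if iz: "Im z > 0" for z
    proof
      assume g0: "g 0 z = 0"
      hence "Im (\<i> * z) = 0" using hv unfolding hyperbolic_along_def g_def by blast
      hence "\<i> * z = of_real (- Im z)" by (simp add: complex_eq_iff)
      with g0 have "hC (cvec ((- Im z) *\<^sub>R v - u)) = 0" by (simp add: g_def ys_def)
      hence "h ((- Im z) *\<^sub>R v - u) = 0" by (simp add: hC_cvec del: cvec_diff cvec_scaleR)
      hence "- Im z > 0" by (rule hcone_root_swap[OF hu0 v])
      thus False using iz by simp
    qed
  qed (use z in auto)
  thus ?thesis by (simp add: g_def ys_def)
qed

lemma hcone_subset_hcone:
  assumes hu: "hyperbolic_along u" and hv: "hyperbolic_along v"
    and v: "v \<in> hcone h u" and y: "y \<in> hcone h u"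
  shows "y \<in> hcone h v"
  unfolding hcone_def
proof (intro CollectI allI impI)
  fix t assume ht: "h (t *\<^sub>R v - y) = 0"
  have "t \<noteq> 0" using ht y unfolding hcone_def by force
  moreover have "\<not> t < 0"
  proof
    assume "t < 0"
    hence "hC (cvec (- y) + (\<i> * (- \<i> * of_real t)) *s cvec v) \<noteq> 0"
      by (intro hcone_upper_zero_free[OF hu hv v y]) simp
    moreover have "cvec (- y) + (\<i> * (- \<i> * of_real t)) *s cvec v = cvec (t *\<^sub>R v - y)"
      by (simp add: vec_eq_iff)
    ultimately show False using ht by (simp add: hC_cvec del: cvec_diff cvec_scaleR cvec_minus)
  qed
  ultimately show "t > 0" by linarith
qed

lemma hcone_add:
  assumes he: "hyperbolic_along e" and a: "a \<in> hcone h e" and b: "b \<in> hcone h e"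
  shows "a + b \<in> hcone h e"
proof -
  have ha: "hyperbolic_along a" by (rule garding_hyperbolic_along[OF he a])
  have ea: "e \<in> hcone h a"
    unfolding hcone_def using hcone_root_swap[OF hyperbolic_along_nonzero[OF he] a] by blast
  have ba: "b \<in> hcone h a" by (rule hcone_subset_hcone[OF he ha a b])
  have "a + b \<in> hcone h a" unfolding hcone_def
  proof (intro CollectI allI impI)
    fix t assume "h (t *\<^sub>R a - (a + b)) = 0"
    hence "h ((t - 1) *\<^sub>R a - b) = 0" by (simp add: algebra_simps)
    hence "t - 1 > 0" using ba unfolding hcone_def by blast
    thus "t > 0" by simp
  qed
  thus ?thesis by (rule hcone_subset_hcone[OF ha he ea])
qed

lemma hC_plane_nonzero:
  assumes he: "hyperbolic_along e"
    and x: "x \<in> hcone h e" and a: "a \<in> hcone h e" and b: "b \<in> hcone h e"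
    and s: "Im s > 0" and t: "Im t \<ge> 0"
  shows "hC (cvec x + s *s cvec a + t *s cvec b) \<noteq> 0"
proof -
  define w where "w = Im s *\<^sub>R a + Im t *\<^sub>R b"
  have w: "w \<in> hcone h e"
  proof (cases "Im t = 0")
    case True thus ?thesis using hcone_scaleR[OF a s] by (simp add: w_def)
  next
    case False
    hence "Im t > 0" using t by simp
    thus ?thesis
      unfolding w_def using hcone_add[OF he hcone_scaleR[OF a s] hcone_scaleR[OF b]] by simp
  qed
  have "cvec x + s *s cvec a + t *s cvec b = cvec (x + Re s *\<^sub>R a + Re t *\<^sub>R b) + \<i> *s cvec w"
    by (simp add: vec_eq_iff w_def complex_eq_iff)
  moreover have "hC (cvec (x + Re s *\<^sub>R a + Re t *\<^sub>R b) + \<i> *s cvec w) \<noteq> 0"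
  proof
    assume "hC (cvec (x + Re s *\<^sub>R a + Re t *\<^sub>R b) + \<i> *s cvec w) = 0"
    hence "Im \<i> = 0" using garding_hyperbolic_along[OF he w] unfolding hyperbolic_along_def by blast
    thus False by simp
  qed
  ultimately show ?thesis by metis
qed

end

section \<open>Real-rooted polynomials and Pick functions\<close>

lemma Im_coeff_ratio_prod_linear_nonpos:
  fixes M :: "complex multiset"
  assumes "\<And>x. x \<in># M \<Longrightarrow> Im x \<le> 0 \<and> x \<noteq> 0"
  shows "coeff (\<Prod>x\<in>#M. [:-x, 1:]) 0 \<noteq> 0 \<and>
         Im (coeff (\<Prod>x\<in>#M. [:-x, 1:]) 1 / coeff (\<Prod>x\<in>#M. [:-x, 1:]) 0) \<le> 0"
  using assms
proof (induction M)
  case empty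
  show ?case by simp
next
  case (add x M)
  define P where "P = (\<Prod>x\<in>#M. [:-x, 1:])"
  have IH: "coeff P 0 \<noteq> 0" "Im (coeff P 1 / coeff P 0) \<le> 0"
    using add by (auto simp: P_def)
  have x: "Im x \<le> 0" "x \<noteq> 0" using add.prems by auto
  have c0: "coeff ([:-x, 1:] * P) 0 = - x * coeff P 0" by simp
  have c1: "coeff ([:-x, 1:] * P) 1 = coeff P 0 - x * coeff P 1"
    by (simp add: coeff_pCons split: nat.split)
  have "coeff P 0 - x * coeff P 1 = (- x * coeff P 0) * (- inverse x + coeff P 1 / coeff P 0)"
    using IH(1) x(2) by (simp add: field_simps)
  hence ratio: "coeff ([:-x, 1:] * P) 1 / coeff ([:-x, 1:] * P) 0 = - inverse x + coeff P 1 / coeff P 0"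
    using IH(1) x(2) unfolding c0 c1 by (simp add: field_simps)
  have "Im (- inverse x) \<le> 0" using x(1) by (simp add: Im_divide divide_nonpos_nonneg)
  hence "Im (- inverse x + coeff P 1 / coeff P 0) \<le> 0" using IH(2) by simp
  thus ?case using ratio c0 IH(1) x(2) by (simp add: P_def)
qed

lemma Im_coeff_ratio_nonpos:
  fixes Q :: "complex poly"
  assumes Q0: "poly Q 0 \<noteq> 0" and roots: "\<And>x. poly Q x = 0 \<Longrightarrow> Im x \<le> 0"
  shows "Im (coeff Q 1 / coeff Q 0) \<le> 0"
proof -
  have Qn: "Q \<noteq> 0" using Q0 by auto
  define M where "M = proots Q"
  have M: "\<And>x. x \<in># M \<Longrightarrow> Im x \<le> 0 \<and> x \<noteq> 0"
    using roots Q0 Qn by (auto simp: M_def)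
  have Qe: "Q = smult (lead_coeff Q) (\<Prod>x\<in>#M. [:-x, 1:])"
    unfolding M_def by (rule complex_poly_decompose_multiset[symmetric])
  have lc: "lead_coeff Q \<noteq> 0" using Qn by simp
  have "coeff Q 1 / coeff Q 0 = coeff (\<Prod>x\<in>#M. [:-x, 1:]) 1 / coeff (\<Prod>x\<in>#M. [:-x, 1:]) 0"
    using lc by (subst (1 2) Qe) simp
  thus ?thesis using Im_coeff_ratio_prod_linear_nonpos[OF M] by simp
qed

lemma real_rooted_poly_linear_factor:
  fixes B :: "real poly"
  assumes "B \<noteq> 0" "degree B > 0" and real: "\<And>z. poly (cpoly B) z = 0 \<Longrightarrow> Im z = 0"
  obtains p B1 where "B = [:-p, 1:] * B1" "B1 \<noteq> 0" "degree B = Suc (degree B1)"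
    "lead_coeff B1 = lead_coeff B" "\<And>z. poly (cpoly B1) z = 0 \<Longrightarrow> Im z = 0"
proof -
  have "\<not> constant (poly (cpoly B))" using assms(2) by (simp add: constant_degree)
  then obtain z where z: "poly (cpoly B) z = 0" using fundamental_theorem_of_algebra by blast
  hence "z = of_real (Re z)" using real[OF z] by (simp add: complex_eq_iff)
  with z have "poly B (Re z) = 0" by (metis of_real_eq_0_iff poly_cpoly_of_real)
  then obtain B1 where B1: "B = [:- Re z, 1:] * B1" using poly_eq_0_iff_dvd by (metis dvdE)
  have "B1 \<noteq> 0" using assms(1) B1 by auto
  moreover have "degree B = Suc (degree B1)" using \<open>B1 \<noteq> 0\<close> by (subst B1, subst degree_mult_eq) auto
  moreover have "lead_coeff B = lead_coeff B1" unfolding B1 by (simp only: lead_coeff_mult) simp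
  moreover have "Im w = 0" if "poly (cpoly B1) w = 0" for w
  proof -
    have "poly (cpoly B) w = 0" unfolding B1 cpoly_mult poly_mult using that by simp
    thus ?thesis by (rule real)
  qed
  ultimately show ?thesis using that B1 by metis
qed

lemma real_rooted_poly_factorization:
  fixes B :: "real poly"
  assumes "B \<noteq> 0" and "\<And>z. poly (cpoly B) z = 0 \<Longrightarrow> Im z = 0"
  shows "\<exists>M. B = smult (lead_coeff B) (\<Prod>p\<in>#M. [:-p, 1:]) \<and> (\<forall>p\<in>#M. poly B p = 0)"
  using assms
proof (induction "degree B" arbitrary: B rule: less_induct)
  case less
  show ?case
  proof (cases "degree B = 0")
    case True
    then obtain a where "B = [:a:]" using degree_eq_zeroE by blast
    thus ?thesis by (intro exI[of _ "{#}"]) simp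
  next
    case False
    then obtain p B1 where B1: "B = [:-p, 1:] * B1" "B1 \<noteq> 0" "degree B = Suc (degree B1)"
        "lead_coeff B1 = lead_coeff B" "\<And>z. poly (cpoly B1) z = 0 \<Longrightarrow> Im z = 0"
      using real_rooted_poly_linear_factor less.prems by blast
    obtain M1 where M1: "B1 = smult (lead_coeff B1) (\<Prod>p\<in>#M1. [:-p, 1:])" "\<forall>q\<in>#M1. poly B1 q = 0"
      using less.hyps[of B1] B1 by auto
    have "B = smult (lead_coeff B) (\<Prod>p\<in>#add_mset p M1. [:-p, 1:])"
      by (subst B1(1), subst M1(1)) (simp add: B1(4))
    moreover have "\<forall>q\<in>#add_mset p M1. poly B q = 0" using M1(2) by (simp add: B1(1))
    ultimately show ?thesis by blast
  qed
qed

lemma real_rooted_simple_factorization: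
  fixes B :: "real poly"
  assumes "B \<noteq> 0" and "\<And>z. poly (cpoly B) z = 0 \<Longrightarrow> Im z = 0"
    and "\<And>p. poly B p = 0 \<Longrightarrow> order p B = 1"
  shows "B = smult (lead_coeff B) (\<Prod>p\<in>{p. poly B p = 0}. [:-p, 1:])"
  using assms
proof (induction "degree B" arbitrary: B rule: less_induct)
  case less
  show ?case
  proof (cases "degree B = 0")
    case True
    then obtain a where "B = [:a:]" using degree_eq_zeroE by blast
    thus ?thesis using less.prems(1) by simp
  next
    case False
    then obtain p B1 where B1: "B = [:-p, 1:] * B1" "B1 \<noteq> 0" "degree B = Suc (degree B1)"
        "lead_coeff B1 = lead_coeff B" "\<And>z. poly (cpoly B1) z = 0 \<Longrightarrow> Im z = 0"
      using real_rooted_poly_linear_factor less.prems by blast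
    have ord: "order q B = order q [:-p,1:] + order q B1" for q
      using less.prems(1) unfolding B1(1) by (intro order_mult) (use B1(1) in simp)
    have "order p [:-p,1:] = 1" using order_power_n_n[of p 1] by (simp only: power_one_right)
    moreover have "order p B = 1" by (rule less.prems(3)) (simp add: B1(1))
    ultimately have "order p B1 = 0" using ord[of p] by simp
    hence pB1: "poly B1 p \<noteq> 0" using B1(2) order_root by blast
    have "order q B1 = 1" if "poly B1 q = 0" for q
    proof -
      have "order q B = 1" using less.prems(3)[of q] that by (simp add: B1(1))
      moreover have "order q B1 \<noteq> 0" using that B1(2) order_root by blast
      ultimately show ?thesis using ord[of q] by simp
    qed
    hence IH: "B1 = smult (lead_coeff B1) (\<Prod>p\<in>{p. poly B1 p = 0}. [:-p, 1:])"
      using less.hyps[of B1] B1 by auto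
    have roots: "{q. poly B q = 0} = insert p {q. poly B1 q = 0}"
      by (auto simp: B1(1))
    have "finite {q. poly B1 q = 0}" using B1(2) by (rule poly_roots_finite)
    thus ?thesis unfolding roots
      by (subst B1(1), subst IH) (simp add: pB1 B1(4))
  qed
qed

lemma logderiv_prod_linear:
  fixes M :: "real multiset"
  assumes "\<And>p. p \<in># M \<Longrightarrow> p \<noteq> t"
  shows "poly (\<Prod>p\<in>#M. [:-p, 1:]) t \<noteq> 0 \<and>
    poly (pderiv (\<Prod>p\<in>#M. [:-p, 1:])) t / poly (\<Prod>p\<in>#M. [:-p, 1:]) t = (\<Sum>p\<in>#M. 1 / (t - p))"
  using assms
proof (induction M)
  case empty thus ?case by simp
next
  case (add x M)
  define P where "P = (\<Prod>p\<in>#M. [:-p, 1:])"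
  have IH: "poly P t \<noteq> 0" "poly (pderiv P) t / poly P t = (\<Sum>p\<in>#M. 1 / (t - p))"
    using add by (auto simp: P_def)
  have xt: "t - x \<noteq> 0" using add.prems by auto
  have "pderiv [:-x,1:] = 1" by (simp add: pderiv_pCons)
  hence "poly (pderiv ([:-x,1:] * P)) t = poly P t + (t - x) * poly (pderiv P) t"
    by (simp only: pderiv_mult poly_add poly_mult poly_1) (simp add: algebra_simps)
  hence "poly (pderiv ([:-x,1:] * P)) t / poly ([:-x,1:] * P) t
      = 1 / (t - x) + poly (pderiv P) t / poly P t"
    using IH(1) xt by (simp add: field_simps)
  thus ?case using IH xt by (simp add: P_def)
qed

lemma pick_pole_limit:
  fixes A C :: "real poly" and p :: real and m :: nat and \<omega> :: complex
  assumes Cp: "poly C p \<noteq> 0" and \<omega>: "Im \<omega> > 0"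
    and pick: "\<And>z. Im z > 0 \<Longrightarrow> Im (poly (cpoly A) z / poly (cpoly ([:-p,1:]^m * C)) z) \<le> 0"
  shows "Im (of_real (poly A p / poly C p) / \<omega> ^ m) \<le> 0"
proof -
  have w0: "\<omega> \<noteq> 0" using \<omega> by auto
  define \<phi> where "\<phi> = (\<lambda>\<epsilon>::real. poly (cpoly A) (of_real p + of_real \<epsilon> * \<omega>) /
                                  (\<omega> ^ m * poly (cpoly C) (of_real p + of_real \<epsilon> * \<omega>)))"
  have lim: "(\<phi> \<longlongrightarrow> \<phi> 0) (at_right 0)"
    unfolding \<phi>_def
    by (intro tendsto_intros) (auto simp: w0 Cp)
  have phi0: "\<phi> 0 = of_real (poly A p / poly C p) / \<omega> ^ m"
    by (simp add: \<phi>_def)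
  have ev: "\<forall>\<^sub>F \<epsilon> in at_right 0. Im (\<phi> \<epsilon>) \<le> 0"
  proof (rule eventually_at_rightI[of 0 1])
    fix \<epsilon> :: real assume "\<epsilon> \<in> {0<..<1}"
    hence e: "0 < \<epsilon>" by simp
    define z where "z = of_real p + of_real \<epsilon> * \<omega>"
    have iz: "Im z > 0" using e \<omega> by (simp add: z_def)
    have Bz: "poly (cpoly ([:-p,1:]^m * C)) z = (of_real \<epsilon> * \<omega>) ^ m * poly (cpoly C) z"
      by (simp add: cpoly_mult cpoly_power z_def)
    have "\<phi> \<epsilon> = of_real (\<epsilon> ^ m) * (poly (cpoly A) z / poly (cpoly ([:-p,1:]^m * C)) z)"
      unfolding Bz \<phi>_def z_def[symmetric] using e w0
      by (cases "poly (cpoly C) z = 0") (simp_all add: field_simps)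
    moreover have "Im (of_real (\<epsilon> ^ m) * w) = \<epsilon> ^ m * Im w" for w :: complex by simp
    ultimately have "Im (\<phi> \<epsilon>) = \<epsilon> ^ m * Im (poly (cpoly A) z / poly (cpoly ([:-p,1:]^m * C)) z)"
      by metis
    also have "\<dots> \<le> 0" using pick[OF iz] e by (simp add: mult_nonneg_nonpos)
    finally show "Im (\<phi> \<epsilon>) \<le> 0" .
  qed simp
  have "Im (\<phi> 0) \<le> 0"
    by (rule tendsto_upperbound[OF tendsto_Im[OF lim] ev trivial_limit_at_right_real])
  thus ?thesis by (simp add: phi0)
qed

text \<open>Near a pole \<open>p\<close> of order \<open>m\<close>, \<open>A / B \<approx> K / (z - p)\<^sup>m\<close>; approaching \<open>p\<close> along every
  direction \<open>\<omega>\<close> of the upper half-plane gives \<open>Im (K / \<omega>\<^sup>m) \<le> 0\<close>, which forces \<open>m = 1\<close>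
  and \<open>K \<ge> 0\<close>.\<close>

lemma pick_pole_simple:
  fixes A B C :: "real poly" and p :: real and m :: nat
  assumes B: "B = [:-p,1:] ^ m * C" and m1: "m \<ge> 1"
    and Cp: "poly C p \<noteq> 0" and Ap: "poly A p \<noteq> 0"
    and pick: "\<And>z. Im z > 0 \<Longrightarrow> Im (poly (cpoly A) z / poly (cpoly B) z) \<le> 0"
  shows "m = 1 \<and> poly A p / poly C p \<ge> 0"
proof -
  define K where "K = poly A p / poly C p"
  have K0: "K \<noteq> 0" using Ap Cp by (simp add: K_def)
  have L: "\<And>\<omega>. Im \<omega> > 0 \<Longrightarrow> Im (of_real K / \<omega> ^ m) \<le> 0"
    unfolding K_def by (rule pick_pole_limit[OF Cp _ pick[unfolded B]])
  show ?thesis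
  proof (cases "m = 1")
    case True
    have "Im (of_real K / \<i> ^ m) \<le> 0" by (rule L) simp
    thus ?thesis using True by (simp add: K_def)
  next
    case False
    hence m2: "m \<ge> 2" using m1 by simp
    have mpos: "real m > 0" using m2 by simp
    define \<omega>1 where "\<omega>1 = cis (pi / (2 * real m))"
    define \<omega>2 where "\<omega>2 = cis (3 / 2 * pi / real m)"
    have "Im \<omega>1 > 0" unfolding \<omega>1_def using m2 mpos
      by (simp, intro sin_gt_zero) (auto simp: field_simps)
    hence "Im (of_real K / \<omega>1 ^ m) \<le> 0" by (rule L)
    moreover have "\<omega>1 ^ m = \<i>"
    proof -
      have "real m * (pi / (2 * real m)) = pi / 2" using mpos by simp
      thus ?thesis unfolding \<omega>1_def Complex.DeMoivre by (simp only: cis_pi_half)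
    qed
    ultimately have k1: "- K \<le> 0" by simp
    have "3 / 2 * pi / real m < pi"
      using m2 pi_gt_zero by (simp add: field_simps)
    hence "Im \<omega>2 > 0" unfolding \<omega>2_def using mpos
      by (simp, intro sin_gt_zero) (auto simp: field_simps)
    hence "Im (of_real K / \<omega>2 ^ m) \<le> 0" by (rule L)
    moreover have "\<omega>2 ^ m = - \<i>"
    proof -
      have "real m * (3 / 2 * pi / real m) = 3 / 2 * pi" using mpos by simp
      hence "\<omega>2 ^ m = cis (3 / 2 * pi)" unfolding \<omega>2_def Complex.DeMoivre by (simp only:)
      also have "\<dots> = - \<i>" using sin_3over2_pi cos_3over2_pi by (simp add: complex_eq_iff)
      finally show ?thesis .
    qed
    ultimately have k2: "K \<le> 0" by simp
    from k1 k2 K0 show ?thesis by simp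
  qed
qed

lemma partial_fractions_distinct_roots:
  fixes A :: "'a::field poly"
  assumes fin: "finite P" and deg: "degree A < card P" and t: "t \<notin> P"
  shows "poly A t / (\<Prod>q\<in>P. t - q) = (\<Sum>p\<in>P. poly A p / (\<Prod>q\<in>P-{p}. p - q) / (t - p))"
proof -
  define Q where "Q = (\<lambda>p. \<Prod>q\<in>P-{p}. [:-q, 1:])"
  define L where "L = (\<Sum>p\<in>P. smult (poly A p / poly (Q p) p) (Q p))"
  have poly_Q: "poly (Q p) s = (\<Prod>q\<in>P-{p}. s - q)" for p s
    by (simp add: Q_def poly_prod)
  have Q_nz: "poly (Q p) p \<noteq> 0" for p
    using fin by (simp add: poly_Q)
  have Q_zero: "poly (Q p) q = 0" if "q \<in> P" "q \<noteq> p" for p q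
    using fin that by (simp add: poly_Q)
  have L_interpolates: "poly L p = poly A p" if "p \<in> P" for p
  proof -
    have "poly L p = poly A p + (\<Sum>q\<in>P-{p}. poly A q / poly (Q q) q * poly (Q q) p)"
      unfolding L_def poly_sum poly_smult using fin that Q_nz by (subst sum.remove) auto
    also have "(\<Sum>q\<in>P-{p}. poly A q / poly (Q q) q * poly (Q q) p) = 0"
      using Q_zero that by (intro sum.neutral) auto
    finally show ?thesis by simp
  qed
  have deg_L: "degree L < card P"
  proof -
    have "degree (Q p) \<le> card P - 1" if "p \<in> P" for p
      using degree_prod_sum_le[of "P-{p}" "\<lambda>q. [:-q,1:]"] fin that by (simp add: Q_def o_def)
    hence "degree L \<le> card P - 1"
      unfolding L_def by (intro degree_sum_le fin) (auto intro: order.trans[OF degree_smult_le])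
    thus ?thesis using deg by linarith
  qed
  have "A = L"
  proof (rule ccontr)
    assume "A \<noteq> L"
    hence "card P \<le> card {x. poly (A - L) x = 0}"
      using L_interpolates by (intro card_mono poly_roots_finite) auto
    also have "\<dots> \<le> degree (A - L)" using \<open>A \<noteq> L\<close> by (intro card_poly_roots_bound) simp
    also have "\<dots> \<le> max (degree A) (degree L)" by (rule degree_diff_le_max)
    finally show False using deg deg_L by linarith
  qed
  have Q_frac: "poly (Q p) t / (\<Prod>q\<in>P. t - q) = 1 / (t - p)" if "p \<in> P" for p
  proof -
    have "(\<Prod>q\<in>P. t - q) = (t - p) * (\<Prod>q\<in>P-{p}. t - q)" using fin that by (rule prod.remove)
    moreover have "(\<Prod>q\<in>P-{p}. t - q) \<noteq> 0" "t - p \<noteq> 0" using fin t that by auto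
    ultimately show ?thesis by (simp add: poly_Q)
  qed
  have "poly L t / (\<Prod>q\<in>P. t - q)
      = (\<Sum>p\<in>P. poly A p / poly (Q p) p * (poly (Q p) t / (\<Prod>q\<in>P. t - q)))"
    unfolding L_def poly_sum poly_smult sum_divide_distrib by (simp only: times_divide_eq_right)
  also have "\<dots> = (\<Sum>p\<in>P. poly A p / poly (Q p) p / (t - p))"
    using Q_frac by (intro sum.cong refl) simp
  finally show ?thesis using \<open>A = L\<close> by (simp add: poly_Q)
qed

lemma pick_partial_fractions_coprime:
  fixes A B :: "real poly"
  assumes B0: "B \<noteq> 0" and deg: "degree A < degree B" and cop: "coprime A B"
    and rootsB: "\<And>z. poly (cpoly B) z = 0 \<Longrightarrow> Im z = 0 \<and> Re z < 0"
    and pick: "\<And>z. Im z > 0 \<Longrightarrow> Im (poly (cpoly A) z / poly (cpoly B) z) \<le> 0"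
  shows "\<exists>P r. finite P \<and> (\<forall>p\<in>P. p < 0 \<and> r p \<ge> 0) \<and>
           (\<forall>t. poly B t \<noteq> 0 \<longrightarrow> poly A t / poly B t = (\<Sum>p\<in>P. r p / (t - p)))"
proof -
  define P where "P = {p. poly B p = 0}"
  define c where "c = lead_coeff B"
  define r where "r = (\<lambda>p. poly A p / (c * (\<Prod>q\<in>P-{p}. p - q)))"
  have finP: "finite P" unfolding P_def using B0 by (rule poly_roots_finite)
  have c0: "c \<noteq> 0" using B0 by (simp add: c_def)
  have A_nz: "poly A p \<noteq> 0" if "p \<in> P" for p
  proof
    assume "poly A p = 0"
    hence "[:-p,1:] dvd A" "[:-p,1:] dvd B" using that by (simp_all add: P_def poly_eq_0_iff_dvd)
    hence "is_unit [:-p,1:]" using cop coprime_common_divisor by blast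
    thus False by (simp add: is_unit_iff_degree)
  qed
  have simple: "order p B = 1" if "poly B p = 0" for p
  proof -
    obtain C where C: "B = [:-p,1:] ^ order p B * C" "\<not> [:-p,1:] dvd C"
      using order_decomp[OF B0] by blast
    have "order p B \<noteq> 0" using that B0 order_root by blast
    moreover have "poly C p \<noteq> 0" using C(2) by (simp add: poly_eq_0_iff_dvd)
    ultimately show ?thesis
      using pick_pole_simple[OF C(1) _ _ A_nz pick] that by (simp add: P_def)
  qed
  have B_eq: "B = smult c (\<Prod>p\<in>P. [:-p, 1:])"
    unfolding P_def c_def
    by (rule real_rooted_simple_factorization[OF B0]) (use rootsB simple in auto)
  have poly_B: "poly B t = c * (\<Prod>q\<in>P. t - q)" for t
    by (subst B_eq) (simp add: poly_prod)
  have "degree B = card P"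
    by (subst B_eq) (simp add: c0 degree_prod_sum_eq)
  have "r p \<ge> 0" if "p \<in> P" for p
  proof -
    define C where "C = smult c (\<Prod>q\<in>P-{p}. [:-q, 1:])"
    have BC: "B = [:-p,1:] ^ 1 * C"
      using prod.remove[OF finP that, of "\<lambda>q. [:-q, 1:]"] B_eq by (simp add: C_def)
    have C_p: "poly C p = c * (\<Prod>q\<in>P-{p}. p - q)" by (simp add: C_def poly_prod)
    hence "poly C p \<noteq> 0" using finP c0 by simp
    with pick_pole_simple[OF BC _ _ A_nz[OF that] pick] show ?thesis by (simp add: r_def C_p)
  qed
  moreover have "p < 0" if "p \<in> P" for p
    using rootsB[of "of_real p"] that by (simp add: P_def)
  moreover have "poly A t / poly B t = (\<Sum>p\<in>P. r p / (t - p))" if "poly B t \<noteq> 0" for t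
  proof -
    have "t \<notin> P" using that by (simp add: P_def)
    have "poly A t / poly B t = (poly A t / (\<Prod>q\<in>P. t - q)) / c" by (simp add: poly_B)
    also have "\<dots> = (\<Sum>p\<in>P. poly A p / (\<Prod>q\<in>P-{p}. p - q) / (t - p)) / c"
      using partial_fractions_distinct_roots[OF finP _ \<open>t \<notin> P\<close>] deg \<open>degree B = card P\<close> by simp
    also have "\<dots> = (\<Sum>p\<in>P. r p / (t - p))"
      by (simp add: r_def sum_divide_distrib field_simps)
    finally show ?thesis .
  qed
  ultimately show ?thesis using finP by blast
qed

lemma pick_partial_fractions:
  fixes A B :: "real poly"
  assumes B0: "B \<noteq> 0" and deg: "A \<noteq> 0 \<Longrightarrow> degree A < degree B"
    and rootsB: "\<And>z. poly (cpoly B) z = 0 \<Longrightarrow> Im z = 0 \<and> Re z < 0"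
    and pick: "\<And>z. Im z > 0 \<Longrightarrow> Im (poly (cpoly A) z / poly (cpoly B) z) \<le> 0"
  shows "\<exists>P r. finite P \<and> (\<forall>p\<in>P. p < 0 \<and> r p \<ge> 0) \<and>
           (\<forall>t. poly B t \<noteq> 0 \<longrightarrow> poly A t / poly B t = (\<Sum>p\<in>P. r p / (t - p)))"
proof (cases "A = 0")
  case True thus ?thesis by (intro exI[of _ "{}"]) simp
next
  case A0: False
  define g where "g = gcd A B"
  define A1 where "A1 = A div g"
  define B1 where "B1 = B div g"
  have Ae: "A = A1 * g" and Be: "B = B1 * g" unfolding A1_def B1_def g_def by simp_all
  have g0: "g \<noteq> 0" using B0 by (simp add: g_def)
  have B10: "B1 \<noteq> 0" using B0 Be by auto
  have cop: "coprime A1 B1" unfolding A1_def B1_def g_def by (rule div_gcd_coprime) (use B0 in auto)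
  have deg1: "degree A1 < degree B1"
    using deg[OF A0] A0 B10 g0 unfolding Ae Be by (simp add: degree_mult_eq)
  have rB1: "Im z = 0 \<and> Re z < 0" if "poly (cpoly B1) z = 0" for z
    using rootsB[of z] that unfolding Be by (simp add: cpoly_mult)
  have pick1: "Im (poly (cpoly A1) z / poly (cpoly B1) z) \<le> 0" if iz: "Im z > 0" for z
  proof -
    have "poly (cpoly g) z \<noteq> 0"
    proof
      assume "poly (cpoly g) z = 0"
      hence "poly (cpoly B) z = 0" unfolding Be by (simp add: cpoly_mult)
      thus False using rootsB iz by force
    qed
    hence "poly (cpoly A) z / poly (cpoly B) z = poly (cpoly A1) z / poly (cpoly B1) z"
      unfolding Ae Be by (simp add: cpoly_mult)
    thus ?thesis using pick[OF iz] by simp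
  qed
  obtain P r where PF: "finite P" "\<forall>p\<in>P. p < 0 \<and> r p \<ge> 0"
      "\<forall>t. poly B1 t \<noteq> 0 \<longrightarrow> poly A1 t / poly B1 t = (\<Sum>p\<in>P. r p / (t - p))"
    using pick_partial_fractions_coprime[OF B10 deg1 cop rB1 pick1] by blast
  have "poly A t / poly B t = (\<Sum>p\<in>P. r p / (t - p))" if "poly B t \<noteq> 0" for t
  proof -
    have "poly g t \<noteq> 0" "poly B1 t \<noteq> 0" using that unfolding Be by auto
    hence "poly A t / poly B t = poly A1 t / poly B1 t" unfolding Ae Be by simp
    thus ?thesis using PF(3) \<open>poly B1 t \<noteq> 0\<close> by simp
  qed
  with PF(1,2) show ?thesis by blast
qed

lemma logderiv_negative_roots:
  fixes B :: "real poly" and M :: "real multiset"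
  assumes B: "B = smult c (\<Prod>p\<in>#M. [:-p, 1:])" and "c \<noteq> 0"
    and neg: "\<And>p. p \<in># M \<Longrightarrow> p < 0" and "t \<ge> 0"
  shows "poly B t \<noteq> 0 \<and> poly (pderiv B) t / poly B t = (\<Sum>p\<in>#M. 1 / (t - p))"
proof -
  have "\<And>p. p \<in># M \<Longrightarrow> p \<noteq> t" using neg \<open>t \<ge> 0\<close> by force
  from logderiv_prod_linear[OF this] show ?thesis using \<open>c \<noteq> 0\<close> by (simp add: B pderiv_smult)
qed

lemma partial_fractions_decrease:
  fixes r :: "real \<Rightarrow> real"
  assumes P: "\<And>p. p \<in> P \<Longrightarrow> p < 0 \<and> r p \<ge> 0" and "\<delta> > 0"
  shows "\<delta> * (\<Sum>p\<in>P. r p / (\<delta> - p)\<^sup>2) \<le> (\<Sum>p\<in>P. r p / (0 - p)) - (\<Sum>p\<in>P. r p / (\<delta> - p))"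
proof -
  have "\<delta> * (r p / (\<delta> - p)\<^sup>2) \<le> r p / (0 - p) - r p / (\<delta> - p)" if "p \<in> P" for p
  proof -
    have p0: "p < 0" and rp: "r p \<ge> 0" using P[OF that] by auto
    have eq: "r p / (0 - p) - r p / (\<delta> - p) = \<delta> * r p / ((- p) * (\<delta> - p))"
      using p0 \<open>\<delta> > 0\<close> by (simp add: field_simps)
    have "(- p) * (\<delta> - p) \<le> (\<delta> - p)\<^sup>2"
      unfolding power2_eq_square using p0 \<open>\<delta> > 0\<close> by (intro mult_right_mono) auto
    moreover have "0 < (\<delta> - p)\<^sup>2 * ((- p) * (\<delta> - p))" using p0 \<open>\<delta> > 0\<close> by (intro mult_pos_pos) auto
    ultimately have "\<delta> * r p / (\<delta> - p)\<^sup>2 \<le> \<delta> * r p / ((- p) * (\<delta> - p))"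
      using rp \<open>\<delta> > 0\<close> by (intro divide_left_mono) auto
    thus ?thesis unfolding eq by simp
  qed
  thus ?thesis by (simp add: sum_distrib_left flip: sum_subtractf) (rule sum_mono)
qed

lemma pderiv_poly_eq_mult:
  fixes A B :: "real poly"
  assumes "open U" "t \<in> U" and AB: "\<And>s. s \<in> U \<Longrightarrow> poly A s = f s * poly B s"
    and f: "(f has_field_derivative f') (at t)"
  shows "poly (pderiv A) t = f' * poly B t + poly (pderiv B) t * f t"
proof -
  have "(poly A has_field_derivative f' * poly B t + poly (pderiv B) t * f t) (at t)"
    using DERIV_mult[OF f poly_DERIV[of B t]]
    by (rule has_field_derivative_transform_within_open[OF _ assms(1,2)]) (simp add: AB)
  thus ?thesis using DERIV_unique[OF poly_DERIV] by blast
qed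

lemma has_field_derivative_partial_fractions:
  fixes r :: "real \<Rightarrow> real"
  assumes "finite P" "t \<notin> P"
  shows "((\<lambda>s. \<Sum>p\<in>P. r p / (s - p)) has_field_derivative - (\<Sum>p\<in>P. r p / (t - p)\<^sup>2)) (at t)"
proof -
  have "((\<lambda>s. \<Sum>p\<in>P. r p / (s - p)) has_field_derivative (\<Sum>p\<in>P. - (r p / (t - p)\<^sup>2))) (at t)"
  proof (rule DERIV_sum)
    fix p assume "p \<in> P"
    hence "t - p \<noteq> 0" using assms(2) by auto
    thus "((\<lambda>s. r p / (s - p)) has_field_derivative - (r p / (t - p)\<^sup>2)) (at t)"
      by (auto intro!: derivative_eq_intros simp: power2_eq_square field_simps)
  qed
  thus ?thesis by (simp add: sum_negf)
qed

text \<open>The target inequality in terms of \<open>F\<^sub>0 = F 0\<close>, \<open>F\<^sub>\<delta> = F \<delta>\<close>, \<open>S = - F' \<delta>\<close> and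
  \<open>G = B' \<delta> / B \<delta>\<close>, where \<open>F = A / B\<close>; when \<open>F\<^sub>0 = 0\<close> both \<open>B 0 / A 0\<close> and \<open>1 / F\<^sub>0\<close> are \<open>0\<close>.\<close>

lemma xi_inequality_arith:
  fixes F0 F\<delta> S G \<delta> :: real
  assumes "\<delta> > 1" "F\<delta> \<ge> 0" "S \<ge> 0" "\<delta> * S \<le> F0 - F\<delta>" "1 / \<delta> \<le> 1 - G"
    and S0: "S = 0 \<Longrightarrow> F0 = 0"
  shows "1 / F0 \<le> (1 - G) / (F\<delta> * (1 - G) + S)"
proof (cases "F0 = 0")
  case True
  have "1 - G > 0" using assms(1,5) by (smt (verit) divide_pos_pos)
  thus ?thesis using True assms(2,3) by simp
next
  case False
  have G: "1 - G > 0" using assms(1,5) by (smt (verit) divide_pos_pos)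
  have "S > 0" using S0 False assms(3) by linarith
  hence D: "F\<delta> * (1 - G) + S > 0" using assms(2) G by (simp add: add_nonneg_pos)
  have F0: "F0 > 0" using assms(2,4) \<open>S > 0\<close> \<open>\<delta> > 1\<close> by (smt (verit) mult_pos_pos)
  have "0 \<le> F0 - F\<delta>" using assms(1,3,4) by (smt (verit) mult_nonneg_nonneg)
  have "S = (\<delta> * S) * (1 / \<delta>)" using assms(1) by simp
  also have "\<dots> \<le> (F0 - F\<delta>) * (1 - G)"
    using assms(1,4,5) \<open>0 \<le> F0 - F\<delta>\<close> by (intro mult_mono) auto
  finally have "F\<delta> * (1 - G) + S \<le> F0 * (1 - G)" by (simp add: algebra_simps)
  thus ?thesis using D F0 by (simp add: divide_simps mult.commute)
qed

lemma pick_xi_inequality: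
  fixes A B :: "real poly" and \<delta> :: real and P :: "real set" and r :: "real \<Rightarrow> real"
    and M :: "real multiset"
  assumes d1: "\<delta> > 1"
    and G: "\<And>t. t \<ge> 0 \<Longrightarrow> poly B t \<noteq> 0 \<and> poly (pderiv B) t / poly B t = (\<Sum>p\<in>#M. 1 / (t - p))"
    and Mneg: "\<And>p. p \<in># M \<Longrightarrow> p < 0"
    and finP: "finite P" and Pr: "\<And>p. p \<in> P \<Longrightarrow> p < 0 \<and> r p \<ge> 0"
    and F: "\<And>t. poly B t \<noteq> 0 \<Longrightarrow> poly A t / poly B t = (\<Sum>p\<in>P. r p / (t - p))"
    and hyp: "poly B 0 / poly (pderiv B) 0 \<ge> \<delta> / (\<delta> - 1)"
  shows "(poly B \<delta> - poly (pderiv B) \<delta>) / (poly A \<delta> - poly (pderiv A) \<delta>) \<ge> poly B 0 / poly A 0"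
proof -
  define Fv where "Fv = (\<lambda>t. \<Sum>p\<in>P. r p / (t - p))"
  define S where "S = (\<Sum>p\<in>P. r p / (\<delta> - p)\<^sup>2)"
  define G\<delta> where "G\<delta> = (\<Sum>p\<in>#M. 1 / (\<delta> - p))"
  have B0: "poly B 0 \<noteq> 0" and B\<delta>: "poly B \<delta> \<noteq> 0" using G[of 0] G[of \<delta>] d1 by auto
  have AF: "poly A t = Fv t * poly B t" if "t \<ge> 0" for t
    using F[of t] G[OF that] by (simp add: Fv_def field_simps)
  have G\<delta>_bound: "1 / \<delta> \<le> 1 - G\<delta>"
  proof -
    have "1 / (\<delta> - p) \<le> 1 / (0 - p)" if "p \<in># M" for p
      using Mneg[OF that] d1 by (intro divide_left_mono mult_pos_pos) auto
    hence "G\<delta> \<le> (\<Sum>p\<in>#M. 1 / (0 - p))" unfolding G\<delta>_def by (rule sum_mset_mono)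
    also have "\<dots> = poly (pderiv B) 0 / poly B 0" using G[of 0] by simp
    also have "\<dots> = inverse (poly B 0 / poly (pderiv B) 0)" by simp
    also have "\<dots> \<le> inverse (\<delta> / (\<delta> - 1))" using hyp d1 by (intro le_imp_inverse_le) auto
    also have "\<dots> = (\<delta> - 1) / \<delta>" by simp
    finally show ?thesis using d1 by (simp add: diff_divide_distrib)
  qed
  have "(Fv has_field_derivative - S) (at \<delta>)"
    unfolding Fv_def S_def by (rule has_field_derivative_partial_fractions[OF finP]) (use Pr d1 in force)
  hence A'\<delta>: "poly (pderiv A) \<delta> = - S * poly B \<delta> + poly (pderiv B) \<delta> * Fv \<delta>"
    by (intro pderiv_poly_eq_mult[of "{0<..}"]) (use d1 AF in auto)
  have B'\<delta>: "poly (pderiv B) \<delta> = G\<delta> * poly B \<delta>"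
    using G[of \<delta>] d1 B\<delta> by (simp add: G\<delta>_def field_simps)
  have "poly B \<delta> - poly (pderiv B) \<delta> = poly B \<delta> * (1 - G\<delta>)"
    by (simp add: B'\<delta> algebra_simps)
  moreover have "poly A \<delta> - poly (pderiv A) \<delta> = poly B \<delta> * (Fv \<delta> * (1 - G\<delta>) + S)"
    using AF[of \<delta>] d1 by (simp add: A'\<delta> B'\<delta> algebra_simps)
  ultimately have LHS: "(poly B \<delta> - poly (pderiv B) \<delta>) / (poly A \<delta> - poly (pderiv A) \<delta>)
      = (1 - G\<delta>) / (Fv \<delta> * (1 - G\<delta>) + S)"
    using B\<delta> by simp
  have "Fv 0 = 0" if "S = 0"
  proof -
    have "\<forall>p\<in>P. r p / (\<delta> - p)\<^sup>2 = 0"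
      using that finP Pr unfolding S_def by (subst (asm) sum_nonneg_eq_0_iff) auto
    moreover have "(\<delta> - p)\<^sup>2 \<noteq> 0" if "p \<in> P" for p using Pr[OF that] d1 by simp
    ultimately show ?thesis by (simp add: Fv_def)
  qed
  moreover have "\<delta> * S \<le> Fv 0 - Fv \<delta>"
    unfolding S_def Fv_def by (rule partial_fractions_decrease) (use Pr d1 in auto)
  moreover have "Fv \<delta> \<ge> 0" "S \<ge> 0"
    unfolding Fv_def S_def using d1 by (auto intro!: sum_nonneg divide_nonneg_pos dest!: Pr)
  ultimately have "1 / Fv 0 \<le> (1 - G\<delta>) / (Fv \<delta> * (1 - G\<delta>) + S)"
    using xi_inequality_arith[OF d1 _ _ _ G\<delta>_bound] by blast
  moreover have "poly B 0 / poly A 0 = 1 / Fv 0" using AF[of 0] B0 by simp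
  ultimately show ?thesis using LHS by simp
qed

section \<open>Polynomials in two variables of bounded total degree\<close>

lemma coeff_mult_at_degree_bounds:
  fixes p q :: "'a::comm_ring_1 poly"
  assumes "degree p \<le> n" "degree q \<le> m"
  shows "coeff (p * q) (n + m) = coeff p n * coeff q m"
proof -
  have "coeff (p * q) (n + m) = (\<Sum>i\<le>n + m. coeff p i * coeff q (n + m - i))"
    by (rule coeff_mult)
  also have "\<dots> = coeff p n * coeff q (n + m - n) + (\<Sum>i\<in>{..n+m}-{n}. coeff p i * coeff q (n + m - i))"
    by (rule sum.remove) auto
  also have "(\<Sum>i\<in>{..n+m}-{n}. coeff p i * coeff q (n + m - i)) = 0"
  proof (intro sum.neutral ballI)
    fix i assume i: "i \<in> {..n+m}-{n}"
    show "coeff p i * coeff q (n + m - i) = 0"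
    proof (cases "i < n")
      case True
      hence "n + m - i > m" using i by auto
      hence "coeff q (n + m - i) = 0" using assms(2) by (intro coeff_eq_0) auto
      thus ?thesis by simp
    next
      case False
      hence "i > n" using i by auto
      hence "coeff p i = 0" using assms(1) by (intro coeff_eq_0) auto
      thus ?thesis by simp
    qed
  qed
  finally show ?thesis by simp
qed

text \<open>A polynomial in \<open>s\<close> with polynomial coefficients in \<open>t\<close> has total degree at most \<open>n\<close> if the
  coefficient of \<open>s\<^sup>k\<close> has degree at most \<open>n - k\<close>; \<open>top_coeff n\<close> is then the coefficient of
  \<open>t\<^sup>n\<close> (at \<open>s = 0\<close>), which is multiplicative.\<close>

definition total_degree_le :: "nat \<Rightarrow> 'a::comm_ring_1 poly poly \<Rightarrow> bool" where
  "total_degree_le n R \<longleftrightarrow> (\<forall>k. coeff R k \<noteq> 0 \<longrightarrow> k \<le> n \<and> degree (coeff R k) \<le> n - k)"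

definition top_coeff :: "nat \<Rightarrow> 'a::comm_ring_1 poly poly \<Rightarrow> 'a" where
  "top_coeff n R = coeff (coeff R 0) n"

lemma total_degree_le_degree_coeff_0: "total_degree_le n R \<Longrightarrow> degree (coeff R 0) \<le> n"
  unfolding total_degree_le_def by (cases "coeff R 0 = 0") auto

lemma total_degree_le_mult:
  fixes p q :: "'a::comm_ring_1 poly poly"
  assumes p: "total_degree_le n p" and q: "total_degree_le m q"
  shows "total_degree_le (n + m) (p * q)"
  unfolding total_degree_le_def
proof (intro allI impI)
  fix k assume nz: "coeff (p * q) k \<noteq> 0"
  have ce: "coeff (p * q) k = (\<Sum>j\<le>k. coeff p j * coeff q (k - j))" by (rule coeff_mult)
  have tm: "coeff p j * coeff q (k - j) \<noteq> 0 \<Longrightarrow> j \<le> n \<and> k - j \<le> m \<and>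
      degree (coeff p j * coeff q (k - j)) \<le> n + m - k" if "j \<le> k" for j
  proof -
    assume t: "coeff p j * coeff q (k - j) \<noteq> 0"
    hence a: "coeff p j \<noteq> 0" "coeff q (k - j) \<noteq> 0" by auto
    have "j \<le> n" "degree (coeff p j) \<le> n - j" using p a(1) unfolding total_degree_le_def by auto
    moreover have "k - j \<le> m" "degree (coeff q (k - j)) \<le> m - (k - j)" using q a(2) unfolding total_degree_le_def by auto
    moreover have "degree (coeff p j * coeff q (k - j)) \<le> degree (coeff p j) + degree (coeff q (k - j))"
      by (rule degree_mult_le)
    ultimately show ?thesis using that by linarith
  qed
  obtain j where j: "j \<le> k" "coeff p j * coeff q (k - j) \<noteq> 0"
  proof (rule ccontr)
    assume "\<not> thesis"
    hence "\<forall>j\<le>k. coeff p j * coeff q (k - j) = 0" using that by blast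
    hence "coeff (p * q) k = 0" unfolding ce by (intro sum.neutral) auto
    with nz show False by simp
  qed
  have kle: "k \<le> n + m" using tm[OF j] by linarith
  have "degree (coeff (p * q) k) \<le> n + m - k"
    unfolding ce
  proof (rule degree_sum_le)
    fix j assume "j \<in> {..k}"
    thus "degree (coeff p j * coeff q (k - j)) \<le> n + m - k"
      using tm[of j] by (cases "coeff p j * coeff q (k - j) = 0") auto
  qed simp
  thus "k \<le> n + m \<and> degree (coeff (p * q) k) \<le> n + m - k" using kle by simp
qed

lemma top_coeff_mult:
  fixes p q :: "'a::comm_ring_1 poly poly"
  assumes p: "total_degree_le n p" and q: "total_degree_le m q"
  shows "top_coeff (n + m) (p * q) = top_coeff n p * top_coeff m q"
  unfolding top_coeff_def coeff_mult_0
  by (rule coeff_mult_at_degree_bounds[OF total_degree_le_degree_coeff_0[OF p] total_degree_le_degree_coeff_0[OF q]])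

lemma total_degree_le_one: "total_degree_le 0 (1 :: 'a::comm_ring_1 poly poly)"
  and top_coeff_one: "top_coeff 0 (1 :: 'a::comm_ring_1 poly poly) = 1"
  by (auto simp: total_degree_le_def top_coeff_def coeff_1)

lemma total_degree_le_power: "total_degree_le n p \<Longrightarrow> total_degree_le (n * k) (p ^ k)"
  by (induction k) (simp_all add: total_degree_le_one total_degree_le_mult)

lemma top_coeff_power: "total_degree_le n p \<Longrightarrow> top_coeff (n * k) (p ^ k) = top_coeff n p ^ k"
proof (induction k)
  case 0 thus ?case by (simp add: top_coeff_one)
next
  case (Suc k)
  have "top_coeff (n * Suc k) (p ^ Suc k) = top_coeff (n + n * k) (p * p ^ k)" by simp
  also have "\<dots> = top_coeff n p * top_coeff (n * k) (p ^ k)" by (rule top_coeff_mult[OF Suc.prems total_degree_le_power[OF Suc.prems]])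
  finally show ?case using Suc by simp
qed

lemma total_degree_le_prod:
  fixes f :: "'b \<Rightarrow> 'a::comm_ring_1 poly poly"
  assumes "finite I" "\<And>i. i \<in> I \<Longrightarrow> total_degree_le (n i) (f i)"
  shows "total_degree_le (sum n I) (prod f I) \<and> top_coeff (sum n I) (prod f I) = (\<Prod>i\<in>I. top_coeff (n i) (f i))"
  using assms
proof (induction I rule: finite_induct)
  case empty thus ?case by (simp add: total_degree_le_one top_coeff_one)
next
  case (insert i I)
  hence IH: "total_degree_le (sum n I) (prod f I)" "top_coeff (sum n I) (prod f I) = (\<Prod>i\<in>I. top_coeff (n i) (f i))" by auto
  have fi: "total_degree_le (n i) (f i)" using insert by auto
  show ?case using insert(1,2) total_degree_le_mult[OF fi IH(1)] top_coeff_mult[OF fi IH(1)] IH(2) by simp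
qed

lemma total_degree_le_sum:
  fixes f :: "'b \<Rightarrow> 'a::comm_ring_1 poly poly"
  assumes "finite S" "\<And>s. s \<in> S \<Longrightarrow> total_degree_le n (f s)"
  shows "total_degree_le n (sum f S) \<and> top_coeff n (sum f S) = (\<Sum>s\<in>S. top_coeff n (f s))"
  using assms
proof (induction S rule: finite_induct)
  case empty thus ?case by (simp add: total_degree_le_def top_coeff_def)
next
  case (insert s S)
  hence IH: "total_degree_le n (sum f S)" "top_coeff n (sum f S) = (\<Sum>s\<in>S. top_coeff n (f s))" by auto
  have fs: "total_degree_le n (f s)" using insert by auto
  have "total_degree_le n (f s + sum f S)" unfolding total_degree_le_def
  proof (intro allI impI)
    fix k assume nz: "coeff (f s + sum f S) k \<noteq> 0"
    hence "coeff (f s) k \<noteq> 0 \<or> coeff (sum f S) k \<noteq> 0" by auto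
    hence kle: "k \<le> n" using fs IH(1) unfolding total_degree_le_def by blast
    have "degree (coeff (f s) k) \<le> n - k" using fs unfolding total_degree_le_def by (cases "coeff (f s) k = 0") auto
    moreover have "degree (coeff (sum f S) k) \<le> n - k" using IH(1) unfolding total_degree_le_def
      by (cases "coeff (sum f S) k = 0") auto
    ultimately have "degree (coeff (f s) k + coeff (sum f S) k) \<le> n - k"
      by (intro order.trans[OF degree_add_le_max]) auto
    thus "k \<le> n \<and> degree (coeff (f s + sum f S) k) \<le> n - k" using kle by simp
  qed
  moreover have "top_coeff n (f s + sum f S) = top_coeff n (f s) + top_coeff n (sum f S)" by (simp add: top_coeff_def)
  ultimately show ?case using insert(1,2) IH(2) by simp
qed

lemma total_degree_le_const: "total_degree_le 0 [:[:c:]:]"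
  and top_coeff_const: "top_coeff 0 [:[:c:]:] = c"
  by (auto simp: total_degree_le_def top_coeff_def coeff_pCons split: nat.split)

lemma total_degree_le_linear: "total_degree_le 1 [:[:u, w:], [:v:]:]"
  and top_coeff_linear: "top_coeff 1 [:[:u, w:], [:v:]:] = w"
  by (auto simp: total_degree_le_def top_coeff_def coeff_pCons split: nat.split)

section \<open>Expansion of \<open>h\<close> on a plane\<close>

lemma poly_map_poly_eval: "poly (map_poly (\<lambda>q. poly q t) R) s = poly (poly R [:s:]) t"
  by (induction R) (simp_all add: map_poly_pCons algebra_simps)

lemma coeff_map_poly_eval: "coeff (map_poly (\<lambda>q. poly q t) R) k = poly (coeff R k) t"
  by (simp add: coeff_map_poly)

lemma degree_map_poly_eval: "degree (map_poly (\<lambda>q. poly q t) R) \<le> degree R"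
  by (rule degree_le) (simp add: coeff_map_poly coeff_eq_0)

lemma poly_eq_sum_upto:
  fixes p :: "'a::comm_ring_1 poly"
  assumes "degree p \<le> n" shows "poly p z = (\<Sum>k\<le>n. coeff p k * z ^ k)"
proof -
  have "poly p z = poly (\<Sum>k\<le>n. monom (coeff p k) k) z"
    using poly_as_sum_of_monoms'[OF assms] by simp
  also have "\<dots> = (\<Sum>k\<le>n. coeff p k * z ^ k)" by (simp add: poly_sum poly_monom)
  finally show ?thesis .
qed

lemma sum_zero_power: "(\<Sum>k\<le>N. (0::real) ^ k * f k) = f 0"
  by (induction N) simp_all

lemma deriv_power_sum_at_0:
  assumes "N \<ge> 1"
  shows "deriv (\<lambda>s. \<Sum>k\<le>N. s ^ k * c k) 0 = (c 1 :: real)"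
proof -
  define p where "p = (\<Sum>k\<le>N. monom (c k) k)"
  have pe: "(\<lambda>s. \<Sum>k\<le>N. s ^ k * c k) = poly p"
    by (rule ext) (simp add: p_def poly_sum poly_monom mult.commute)
  have "coeff p 1 = c 1" using assms by (simp add: p_def coeff_sum coeff_monom)
  hence c1: "poly (pderiv p) 0 = c 1" by (simp add: poly_0_coeff_0 coeff_pderiv)
  have "deriv (poly p) 0 = poly (pderiv p) 0" by (rule DERIV_imp_deriv[OF poly_DERIV])
  thus ?thesis unfolding pe c1 .
qed

context homogeneous_form
begin

text \<open>\<open>plane_exp x a b\<close> is \<open>hC (x + s a + t b)\<close> as a polynomial in \<open>s\<close> whose coefficients are
  polynomials in \<open>t\<close>; its coefficients are real (\<open>coeff_plane_exp\<close>), and \<open>plane_coeff x a b k\<close>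
  is the real polynomial in \<open>t\<close> multiplying \<open>s\<^sup>k\<close>.\<close>

definition plane_exp :: "real^'n \<Rightarrow> real^'n \<Rightarrow> real^'n \<Rightarrow> complex poly poly" where
  "plane_exp x a b = (\<Sum>\<alpha>\<in>S. [:[:of_real (c \<alpha>):]:] *
     (\<Prod>i\<in>UNIV. [:[:cvec x $ i, cvec b $ i:], [:cvec a $ i:]:] ^ (\<alpha> i)))"

definition plane_coeff :: "real^'n \<Rightarrow> real^'n \<Rightarrow> real^'n \<Rightarrow> nat \<Rightarrow> real poly" where
  "plane_coeff x a b k = map_poly Re (coeff (plane_exp x a b) k)"

lemma poly_plane_exp: "poly (map_poly (\<lambda>q. poly q t) (plane_exp x a b)) s = hC (cvec x + s *s cvec a + t *s cvec b)"
  by (simp add: poly_map_poly_eval plane_exp_def hC_def poly_sum poly_prod mult_ac)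

lemma coeff_plane_exp: "coeff (plane_exp x a b) k = cpoly (plane_coeff x a b k)"
proof -
  have "poly (coeff (plane_exp x a b) k) (of_real t) \<in> \<real>" for t
  proof -
    define Q where "Q = map_poly (\<lambda>q. poly q (of_real t)) (plane_exp x a b)"
    have "Q = cpoly (map_poly Re Q)"
    proof (rule cpoly_Re_if_real_values)
      fix s :: real
      have "poly Q (of_real s) = hC (cvec (x + s *\<^sub>R a + t *\<^sub>R b))" by (simp add: Q_def poly_plane_exp)
      thus "poly Q (of_real s) \<in> \<real>" by (simp only: hC_cvec) simp
    qed
    hence "coeff Q k \<in> \<real>" by (metis Reals_of_real coeff_map_poly of_real_0)
    thus ?thesis by (simp add: Q_def coeff_map_poly_eval)
  qed
  thus ?thesis unfolding plane_coeff_def by (rule cpoly_Re_if_real_values)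
qed

lemma h_plane_expansion:
  "h (x + s *\<^sub>R a + t *\<^sub>R b) = (\<Sum>k\<le>Suc (degree (plane_exp x a b)). s ^ k * poly (plane_coeff x a b k) t)"
proof -
  define Q where "Q = map_poly (\<lambda>q. poly q (of_real t)) (plane_exp x a b)"
  have dQ: "degree Q \<le> Suc (degree (plane_exp x a b))" unfolding Q_def
    using degree_map_poly_eval le_SucI by blast
  have "of_real (h (x + s *\<^sub>R a + t *\<^sub>R b)) = poly Q (of_real s)"
    by (simp add: Q_def poly_plane_exp hC_cvec[symmetric])
  also have "\<dots> = (\<Sum>k\<le>Suc (degree (plane_exp x a b)). coeff Q k * (of_real s) ^ k)"
    by (rule poly_eq_sum_upto[OF dQ])
  also have "\<dots> = of_real (\<Sum>k\<le>Suc (degree (plane_exp x a b)). s ^ k * poly (plane_coeff x a b k) t)"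
    by (simp add: Q_def coeff_map_poly_eval coeff_plane_exp mult.commute)
  finally show ?thesis by (simp only: of_real_eq_iff)
qed

lemma dirderiv_line:
  "dirderiv b h (x + t *\<^sub>R b) = poly (pderiv (plane_coeff x a b 0)) t"
proof -
  have eq: "(\<lambda>r. h (x + t *\<^sub>R b + r *\<^sub>R b)) = (\<lambda>r. poly (plane_coeff x a b 0) (r + t))"
  proof
    fix r
    have "h (x + t *\<^sub>R b + r *\<^sub>R b) = h (x + 0 *\<^sub>R a + (r + t) *\<^sub>R b)"
      by (simp add: algebra_simps)
    also have "\<dots> = poly (plane_coeff x a b 0) (r + t)" by (simp only: h_plane_expansion sum_zero_power)
    finally show "h (x + t *\<^sub>R b + r *\<^sub>R b) = poly (plane_coeff x a b 0) (r + t)" .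
  qed
  have "((\<lambda>r. poly (plane_coeff x a b 0) (r + t)) has_field_derivative poly (pderiv (plane_coeff x a b 0)) t) (at 0)"
    using DERIV_shift[of "poly (plane_coeff x a b 0)" "poly (pderiv (plane_coeff x a b 0)) t" 0 t] poly_DERIV by simp
  thus ?thesis unfolding dirderiv_def eq by (rule DERIV_imp_deriv)
qed

lemma h_line: "h (x + t *\<^sub>R b) = poly (plane_coeff x a b 0) t"
  using h_plane_expansion[of x 0 a t b] by (simp only: sum_zero_power) simp

lemma dirderiv_transversal:
  "dirderiv a h (x + t *\<^sub>R b) = poly (plane_coeff x a b 1) t"
proof -
  have eq: "(\<lambda>s. h (x + t *\<^sub>R b + s *\<^sub>R a)) = (\<lambda>s. \<Sum>k\<le>Suc (degree (plane_exp x a b)). s ^ k * poly (plane_coeff x a b k) t)"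
  proof (rule ext)
    fix s
    have "x + t *\<^sub>R b + s *\<^sub>R a = x + s *\<^sub>R a + t *\<^sub>R b" by (simp add: algebra_simps)
    thus "h (x + t *\<^sub>R b + s *\<^sub>R a) = (\<Sum>k\<le>Suc (degree (plane_exp x a b)). s ^ k * poly (plane_coeff x a b k) t)"
      by (simp only: h_plane_expansion)
  qed
  show ?thesis unfolding dirderiv_def eq by (rule deriv_power_sum_at_0) simp
qed

lemma dirderiv_transversal_shift:
  "dirderiv a (\<lambda>y. h y - dirderiv b h y) (x + t *\<^sub>R b) = poly (plane_coeff x a b 1) t - poly (pderiv (plane_coeff x a b 1)) t"
proof -
  define N where "N = Suc (degree (plane_exp x a b))"
  have db: "dirderiv b h (x + t *\<^sub>R b + s *\<^sub>R a) = (\<Sum>k\<le>N. s ^ k * poly (pderiv (plane_coeff x a b k)) t)" for s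
  proof -
    have eq: "(\<lambda>r. h (x + t *\<^sub>R b + s *\<^sub>R a + r *\<^sub>R b)) = (\<lambda>r. \<Sum>k\<le>N. s ^ k * poly (plane_coeff x a b k) (r + t))"
    proof (rule ext)
      fix r
      have "x + t *\<^sub>R b + s *\<^sub>R a + r *\<^sub>R b = x + s *\<^sub>R a + (r + t) *\<^sub>R b" by (simp add: algebra_simps)
      thus "h (x + t *\<^sub>R b + s *\<^sub>R a + r *\<^sub>R b) = (\<Sum>k\<le>N. s ^ k * poly (plane_coeff x a b k) (r + t))"
        by (simp only: h_plane_expansion N_def)
    qed
    have "((\<lambda>r. \<Sum>k\<le>N. s ^ k * poly (plane_coeff x a b k) (r + t)) has_field_derivative
            (\<Sum>k\<le>N. s ^ k * poly (pderiv (plane_coeff x a b k)) t)) (at 0)"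
    proof (rule DERIV_sum)
      fix k
      have "((\<lambda>r. poly (plane_coeff x a b k) (r + t)) has_field_derivative poly (pderiv (plane_coeff x a b k)) t) (at 0)"
        using DERIV_shift[of "poly (plane_coeff x a b k)" "poly (pderiv (plane_coeff x a b k)) t" 0 t] poly_DERIV by simp
      thus "((\<lambda>r. s ^ k * poly (plane_coeff x a b k) (r + t)) has_field_derivative s ^ k * poly (pderiv (plane_coeff x a b k)) t) (at 0)"
        by (rule DERIV_cmult)
    qed
    thus ?thesis unfolding dirderiv_def eq by (rule DERIV_imp_deriv)
  qed
  have eq: "(\<lambda>s. h (x + t *\<^sub>R b + s *\<^sub>R a) - dirderiv b h (x + t *\<^sub>R b + s *\<^sub>R a))
      = (\<lambda>s. \<Sum>k\<le>N. s ^ k * (poly (plane_coeff x a b k) t - poly (pderiv (plane_coeff x a b k)) t))"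
  proof
    fix s
    have "h (x + t *\<^sub>R b + s *\<^sub>R a) = (\<Sum>k\<le>N. s ^ k * poly (plane_coeff x a b k) t)"
    proof -
      have "x + t *\<^sub>R b + s *\<^sub>R a = x + s *\<^sub>R a + t *\<^sub>R b" by (simp add: algebra_simps)
      thus ?thesis by (simp only: h_plane_expansion N_def)
    qed
    thus "h (x + t *\<^sub>R b + s *\<^sub>R a) - dirderiv b h (x + t *\<^sub>R b + s *\<^sub>R a)
        = (\<Sum>k\<le>N. s ^ k * (poly (plane_coeff x a b k) t - poly (pderiv (plane_coeff x a b k)) t))"
      by (simp add: db sum_subtractf right_diff_distrib)
  qed
  show ?thesis unfolding dirderiv_def[of a "\<lambda>y. h y - dirderiv b h y"] eq
    by (rule deriv_power_sum_at_0) (simp add: N_def)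
qed

lemma plane_exp_total_degree: "total_degree_le d (plane_exp x a b) \<and> top_coeff d (plane_exp x a b) = of_real (h b)"
proof -
  define L where "L = (\<lambda>i. [:[:cvec x $ i, cvec b $ i:], [:cvec a $ i:]:])"
  define T where "T = (\<lambda>\<alpha>. [:[:of_real (c \<alpha>):]:] * (\<Prod>i\<in>UNIV. L i ^ (\<alpha> i)))"
  have RRe: "plane_exp x a b = (\<Sum>\<alpha>\<in>S. T \<alpha>)" unfolding plane_exp_def T_def L_def by simp
  have Tt: "total_degree_le d (T \<alpha>) \<and> top_coeff d (T \<alpha>) = of_real (c \<alpha>) * (\<Prod>i\<in>UNIV. (cvec b $ i) ^ (\<alpha> i))"
    if "\<alpha> \<in> S" for \<alpha>
  proof -
    have Li: "total_degree_le (1 * \<alpha> i) (L i ^ \<alpha> i) \<and> top_coeff (1 * \<alpha> i) (L i ^ \<alpha> i) = (cvec b $ i) ^ (\<alpha> i)" for i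
    proof -
      have tl: "total_degree_le 1 (L i)" unfolding L_def by (rule total_degree_le_linear)
      have "top_coeff (1 * \<alpha> i) (L i ^ \<alpha> i) = top_coeff 1 (L i) ^ \<alpha> i" by (rule top_coeff_power[OF tl])
      also have "top_coeff 1 (L i) = cvec b $ i" unfolding L_def by (rule top_coeff_linear)
      finally show ?thesis using total_degree_le_power[OF tl, of "\<alpha> i"] by simp
    qed
    have P: "total_degree_le (\<Sum>i\<in>UNIV. 1 * \<alpha> i) (\<Prod>i\<in>UNIV. L i ^ (\<alpha> i)) \<and>
             top_coeff (\<Sum>i\<in>UNIV. 1 * \<alpha> i) (\<Prod>i\<in>UNIV. L i ^ (\<alpha> i)) = (\<Prod>i\<in>UNIV. (cvec b $ i) ^ (\<alpha> i))"
      using total_degree_le_prod[of UNIV "\<lambda>i. 1 * \<alpha> i" "\<lambda>i. L i ^ \<alpha> i"] Li by simp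
    hence P': "total_degree_le d (\<Prod>i\<in>UNIV. L i ^ (\<alpha> i)) \<and>
             top_coeff d (\<Prod>i\<in>UNIV. L i ^ (\<alpha> i)) = (\<Prod>i\<in>UNIV. (cvec b $ i) ^ (\<alpha> i))"
      using degree_S[OF that] by simp
    have "total_degree_le (0 + d) (T \<alpha>)" unfolding T_def by (rule total_degree_le_mult[OF total_degree_le_const]) (use P' in blast)
    moreover have "top_coeff (0 + d) (T \<alpha>) = of_real (c \<alpha>) * (\<Prod>i\<in>UNIV. (cvec b $ i) ^ (\<alpha> i))"
      unfolding T_def by (subst top_coeff_mult[OF total_degree_le_const]) (use P' top_coeff_const in auto)
    ultimately show ?thesis by simp
  qed
  have "total_degree_le d (\<Sum>\<alpha>\<in>S. T \<alpha>) \<and> top_coeff d (\<Sum>\<alpha>\<in>S. T \<alpha>) = (\<Sum>\<alpha>\<in>S. top_coeff d (T \<alpha>))"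
    by (rule total_degree_le_sum[OF finite_S]) (use Tt in blast)
  moreover have "(\<Sum>\<alpha>\<in>S. top_coeff d (T \<alpha>)) = hC (cvec b)"
    unfolding hC_def using Tt by (intro sum.cong refl) auto
  ultimately show ?thesis unfolding RRe by (simp add: hC_cvec)
qed

lemma degree_plane_coeff_0: "h b \<noteq> 0 \<Longrightarrow> degree (plane_coeff x a b 0) = d"
proof -
  assume hb: "h b \<noteq> 0"
  have T: "total_degree_le d (plane_exp x a b)" "top_coeff d (plane_exp x a b) = of_real (h b)" using plane_exp_total_degree by auto
  have le: "degree (coeff (plane_exp x a b) 0) \<le> d" by (rule total_degree_le_degree_coeff_0[OF T(1)])
  have "coeff (coeff (plane_exp x a b) 0) d \<noteq> 0" using T(2) hb by (simp add: top_coeff_def)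
  hence "degree (coeff (plane_exp x a b) 0) \<ge> d" by (rule le_degree)
  with le have "degree (coeff (plane_exp x a b) 0) = d" by simp
  thus ?thesis by (simp add: coeff_plane_exp)
qed

lemma degree_plane_coeff_1: "plane_coeff x a b 1 \<noteq> 0 \<Longrightarrow> 1 \<le> d \<and> degree (plane_coeff x a b 1) \<le> d - 1"
proof -
  assume nz: "plane_coeff x a b 1 \<noteq> 0"
  hence "coeff (plane_exp x a b) 1 \<noteq> 0" by (simp add: coeff_plane_exp)
  hence "1 \<le> d \<and> degree (coeff (plane_exp x a b) 1) \<le> d - 1" using plane_exp_total_degree unfolding total_degree_le_def by blast
  thus ?thesis by (simp add: coeff_plane_exp)
qed

lemma hcone_add_scaleR:
  assumes "hyperbolic_along e" "x \<in> hcone h e" "b \<in> hcone h e" "t \<ge> 0"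
  shows "x + t *\<^sub>R b \<in> hcone h e"
proof (cases "t = 0")
  case False
  thus ?thesis using assms hcone_add hcone_scaleR by simp
qed (use assms in simp)

lemma poly_plane_coeff_0: "poly (cpoly (plane_coeff x a b 0)) z = hC (cvec x + z *s cvec b)"
proof -
  have "poly (cpoly (plane_coeff x a b 0)) z = coeff (map_poly (\<lambda>q. poly q z) (plane_exp x a b)) 0"
    by (simp add: coeff_map_poly_eval coeff_plane_exp)
  also have "\<dots> = poly (map_poly (\<lambda>q. poly q z) (plane_exp x a b)) 0"
    by (simp add: poly_0_coeff_0)
  also have "\<dots> = hC (cvec x + z *s cvec b)" by (simp add: poly_plane_exp)
  finally show ?thesis .
qed

lemma plane_coeff_0_roots:
  assumes he: "hyperbolic_along e" and x: "x \<in> hcone h e" and b: "b \<in> hcone h e"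
    and z: "poly (cpoly (plane_coeff x a b 0)) z = 0"
  shows "Im z = 0 \<and> Re z < 0"
proof -
  have zero: "hC (cvec x + z *s cvec b) = 0" using z by (simp add: poly_plane_coeff_0)
  hence "Im z = 0" using garding_hyperbolic_along[OF he b] unfolding hyperbolic_along_def by blast
  hence "z = of_real (Re z)" by (simp add: complex_eq_iff)
  hence "hC (cvec (x + Re z *\<^sub>R b)) = 0" using zero by simp
  hence "h (x + Re z *\<^sub>R b) = 0" by (simp only: hC_cvec of_real_eq_0_iff)
  hence "\<not> Re z \<ge> 0" using hcone_add_scaleR[OF he x b] hcone_nonzero by blast
  with \<open>Im z = 0\<close> show ?thesis by simp
qed

text \<open>For fixed \<open>z\<close> in the upper half-plane, \<open>s \<mapsto> hC (x + s a + z b)\<close> has all its zeros in the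
  closed lower half-plane, so its logarithmic derivative at \<open>0\<close>, which is \<open>A z / B z\<close>, has
  nonpositive imaginary part.\<close>

lemma plane_coeff_Im_ratio_nonpos:
  assumes he: "hyperbolic_along e"
    and x: "x \<in> hcone h e" and a: "a \<in> hcone h e" and b: "b \<in> hcone h e" and z: "Im z > 0"
  shows "Im (poly (cpoly (plane_coeff x a b 1)) z / poly (cpoly (plane_coeff x a b 0)) z) \<le> 0"
proof -
  define Q where "Q = map_poly (\<lambda>q. poly q z) (plane_exp x a b)"
  have Q: "poly Q s = hC (cvec x + s *s cvec a + z *s cvec b)" for s by (simp add: Q_def poly_plane_exp)
  have "poly Q 0 \<noteq> 0"
  proof
    assume "poly Q 0 = 0"
    hence "hC (cvec x + z *s cvec b) = 0" using Q[of 0] by simp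
    hence "Im z = 0" using garding_hyperbolic_along[OF he b] unfolding hyperbolic_along_def by blast
    thus False using z by simp
  qed
  moreover have "Im s \<le> 0" if "poly Q s = 0" for s
  proof (rule ccontr)
    assume "\<not> Im s \<le> 0"
    hence "hC (cvec x + s *s cvec a + z *s cvec b) \<noteq> 0"
      using hC_plane_nonzero[OF he x a b, of s z] z by simp
    thus False using that Q by simp
  qed
  ultimately have "Im (coeff Q 1 / coeff Q 0) \<le> 0" by (rule Im_coeff_ratio_nonpos)
  thus ?thesis by (simp add: Q_def coeff_map_poly_eval coeff_plane_exp)
qed

lemma degree_plane_coeff_1_less:
  assumes "h b \<noteq> 0" "plane_coeff x a b 1 \<noteq> 0"
  shows "degree (plane_coeff x a b 1) < degree (plane_coeff x a b 0)"
  using degree_plane_coeff_1[OF assms(2)] degree_plane_coeff_0[OF assms(1), of x a] by linarith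

lemma xi_plane_coeffs:
  shows "xi b h x = poly (plane_coeff x a b 0) 0 / poly (pderiv (plane_coeff x a b 0)) 0"
    and "xi a h x = poly (plane_coeff x a b 0) 0 / poly (plane_coeff x a b 1) 0"
    and "xi a (\<lambda>y. h y - dirderiv b h y) (x + \<delta> *\<^sub>R b) =
      (poly (plane_coeff x a b 0) \<delta> - poly (pderiv (plane_coeff x a b 0)) \<delta>) /
      (poly (plane_coeff x a b 1) \<delta> - poly (pderiv (plane_coeff x a b 1)) \<delta>)"
proof -
  have "h x = poly (plane_coeff x a b 0) 0" using h_line[of x 0 b a] by simp
  moreover have "dirderiv b h x = poly (pderiv (plane_coeff x a b 0)) 0"
    using dirderiv_line[of b x 0 a] by simp
  moreover have "dirderiv a h x = poly (plane_coeff x a b 1) 0"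
    using dirderiv_transversal[of a x 0 b] by simp
  ultimately show "xi b h x = poly (plane_coeff x a b 0) 0 / poly (pderiv (plane_coeff x a b 0)) 0"
    and "xi a h x = poly (plane_coeff x a b 0) 0 / poly (plane_coeff x a b 1) 0"
    by (simp_all only: xi_def)
  show "xi a (\<lambda>y. h y - dirderiv b h y) (x + \<delta> *\<^sub>R b) =
      (poly (plane_coeff x a b 0) \<delta> - poly (pderiv (plane_coeff x a b 0)) \<delta>) /
      (poly (plane_coeff x a b 1) \<delta> - poly (pderiv (plane_coeff x a b 1)) \<delta>)"
    unfolding xi_def dirderiv_transversal_shift dirderiv_line[of b x \<delta> a] h_line[of x \<delta> b a] ..
qed

theorem xi_shift_inequality:
  assumes he: "hyperbolic_along e" and x: "x \<in> hcone h e" and a: "a \<in> hcone h e"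
    and b: "b \<in> hcone h e" and d1: "\<delta> > 1" and hyp: "xi b h x \<ge> \<delta> / (\<delta> - 1)"
  shows "xi a (\<lambda>y. h y - dirderiv b h y) (x + \<delta> *\<^sub>R b) \<ge> xi a h x"
proof -
  define A where "A = plane_coeff x a b 1"
  define B where "B = plane_coeff x a b 0"
  have B0: "B \<noteq> 0" using hcone_nonzero[OF x] h_line[of x 0 b a] by (auto simp: B_def)
  have rootsB: "\<And>z. poly (cpoly B) z = 0 \<Longrightarrow> Im z = 0 \<and> Re z < 0"
    unfolding B_def by (rule plane_coeff_0_roots[OF he x b])
  have deg: "degree A < degree B" if "A \<noteq> 0"
    using degree_plane_coeff_1_less[OF hcone_nonzero[OF b]] that unfolding A_def B_def .
  have pick: "Im (poly (cpoly A) z / poly (cpoly B) z) \<le> 0" if "Im z > 0" for z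
    unfolding A_def B_def by (rule plane_coeff_Im_ratio_nonpos[OF he x a b that])
  obtain P r where PF: "finite P" "\<forall>p\<in>P. p < 0 \<and> r p \<ge> 0"
      "\<forall>t. poly B t \<noteq> 0 \<longrightarrow> poly A t / poly B t = (\<Sum>p\<in>P. r p / (t - p))"
    using pick_partial_fractions[OF B0 deg rootsB pick] by blast
  obtain M where M: "B = smult (lead_coeff B) (\<Prod>p\<in>#M. [:-p, 1:])" "\<forall>p\<in>#M. poly B p = 0"
    using real_rooted_poly_factorization[OF B0] rootsB by blast
  have Mneg: "p < 0" if "p \<in># M" for p
    using rootsB[of "of_real p"] M(2) that by simp
  have "(poly B \<delta> - poly (pderiv B) \<delta>) / (poly A \<delta> - poly (pderiv A) \<delta>) \<ge> poly B 0 / poly A 0"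
  proof (rule pick_xi_inequality[OF d1 _ Mneg PF(1)])
    show "poly B t \<noteq> 0 \<and> poly (pderiv B) t / poly B t = (\<Sum>p\<in>#M. 1 / (t - p))" if "t \<ge> 0" for t
      using logderiv_negative_roots[OF M(1) _ Mneg that] B0 by simp
    show "\<delta> / (\<delta> - 1) \<le> poly B 0 / poly (pderiv B) 0"
      using hyp unfolding xi_plane_coeffs(1)[where a = a] B_def .
  qed (use PF(2,3) in auto)
  thus ?thesis unfolding xi_plane_coeffs(2)[where b = b] xi_plane_coeffs(3) A_def B_def .
qed

end

theorem lemma4p3:
  fixes h :: "real^'n \<Rightarrow> real" and e x :: "real^'n"
    and v :: "nat \<Rightarrow> real^'n" and m i j :: nat and \<delta> :: real
  assumes "hyperbolic h e"
    and "\<forall>k\<in>{1..m}. v k \<in> hcone h e"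
    and "x \<in> hcone h e"
    and "i \<in> {1..m}" and "j \<in> {1..m}"
    and "\<delta> > 1"
    and "xi (v j) h x \<ge> \<delta> / (\<delta> - 1)"
  shows "xi (v i) (\<lambda>y. h y - dirderiv (v j) h y) (x + \<delta> *\<^sub>R v j) \<ge> xi (v i) h x"
proof -
  obtain d where "homogeneous_poly d h" using assms(1) unfolding hyperbolic_def by blast
  then obtain S c where "homogeneous_expansion d S c h" using homogeneous_poly_expansion by blast
  then interpret homogeneous_form d S c h by (rule homogeneous_form.intro)
  show ?thesis
    using xi_shift_inequality[OF hyperbolic_imp_hyperbolic_along[OF assms(1)] assms(3) _ _ assms(6,7)]
      assms(2,4,5) by auto
qed

end
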